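(* Fix a dimension $d\ge2$. There is a constant $K_d$ such that for every $L$ and any two dimensional hierarchies $\sigma,\sigma'$ of $\{1,\dots,d\}$, there is a circuit on the $d$-dimensional nearest-neighbour qubit lattice $\{0,\dots,L-1\}^d$ ($N=L^d$), consisting of at most $K_dN$ nearest-neighbour CNOT/CZ gates and single-qubit Clifford gates and of depth at most $K_dL=K_dN^{1/d}$, that maps the JW encoding with ordering $m_S^\sigma$ to the JW encoding with ordering $m_S^{\sigma'}$.
   Context: Qubits are indexed by $v=(v_1,\dots,v_d)\in\{0,\dots,L-1\}^d$, two-qubit gates only between sites at $\ell_1$-distance 1; mode $j$ is identified with qubit $j$. $\rho_s(t)=t$ if $s$ is even and $\rho_s(t)=L-1-t$ if $s$ is odd. A dimensional hierarchy is a permutation $\sigma=(\sigma_1,\dots,\sigma_d)$ of $\{1,\dots,d\}$. The snake ordering is $m_S^\sigma(v)=\sum_{i=1}^{d}L^{i-1}\rho_{s_i}(v_{\sigma_i})$ with $s_i=\sum_{k=i+1}^{d}v_{\sigma_k}$ (empty sum $=0$). The JW encoding with ordering $m$ has Majoranas $\chi^{(m)}_{2j}=X_j\prod_{k:m(k)<m(j)}Z_k$, $\chi^{(m)}_{2j+1}=Y_j\prod_{k:m(k)<m(j)}Z_k$; a unitary $W$ maps the encoding with ordering $m$ to that with $m'$ if $W\chi^{(m)}_aW^\dagger=\chi^{(m')}_a$ for all $a$. *)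

theory Defs
  imports Complex_Main
begin

(* Sites of the lattice {0..L-1}^d: a site v = (v_1,...,v_d) is the list [v_1,...,v_d],
   so the coordinate v_i is  v ! (i - 1).  Qubits (= fermionic modes) are sites. *)
definition sites :: "nat \<Rightarrow> nat \<Rightarrow> nat list set" where
  "sites L d = {v. length v = d \<and> (\<forall>x\<in>set v. x < L)}"

definition l1dist :: "nat list \<Rightarrow> nat list \<Rightarrow> nat" where
  "l1dist u v = (\<Sum>i<length u. nat \<bar>int (u ! i) - int (v ! i)\<bar>)"

definition rho :: "nat \<Rightarrow> nat \<Rightarrow> nat \<Rightarrow> nat" where
  "rho L s t = (if even s then t else L - 1 - t)"

definition coord :: "nat list \<Rightarrow> nat \<Rightarrow> nat" where
  "coord v i = v ! (i - 1)"

definition snake :: "nat \<Rightarrow> nat \<Rightarrow> (nat \<Rightarrow> nat) \<Rightarrow> nat list \<Rightarrow> nat" where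
  "snake L d \<sigma> v =
     (\<Sum>i=1..d. L ^ (i - 1) *
        rho L (\<Sum>k=i+1..d. coord v (\<sigma> k)) (coord v (\<sigma> i)))"

definition hierarchy :: "nat \<Rightarrow> (nat \<Rightarrow> nat) \<Rightarrow> bool" where
  "hierarchy d \<sigma> \<longleftrightarrow> bij_betw \<sigma> {1..d} {1..d}"

type_synonym config = "nat list \<Rightarrow> bool"
type_synonym state = "config \<Rightarrow> complex"

(* Pauli operators on qubit j  (bit True = |1>) *)
definition PX :: "nat list \<Rightarrow> state \<Rightarrow> state" where
  "PX j \<psi> = (\<lambda>c. \<psi> (c(j := \<not> c j)))"

definition PY :: "nat list \<Rightarrow> state \<Rightarrow> state" where
  "PY j \<psi> = (\<lambda>c. (if c j then \<i> else - \<i>) * \<psi> (c(j := \<not> c j)))"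

definition Zprod :: "nat list set \<Rightarrow> state \<Rightarrow> state" where
  "Zprod S \<psi> = (\<lambda>c. (-1) ^ card {k\<in>S. c k} * \<psi> c)"

(* JW Majoranas for ordering m on the lattice sites:
   chi_{2j} = X_j prod_{k : m k < m j} Z_k,   chi_{2j+1} = Y_j prod_{k : m k < m j} Z_k *)
definition majX :: "nat list set \<Rightarrow> (nat list \<Rightarrow> nat) \<Rightarrow> nat list \<Rightarrow> state \<Rightarrow> state" where
  "majX Q m j = PX j \<circ> Zprod {k\<in>Q. m k < m j}"

definition majY :: "nat list set \<Rightarrow> (nat list \<Rightarrow> nat) \<Rightarrow> nat list \<Rightarrow> state \<Rightarrow> state" where
  "majY Q m j = PY j \<circ> Zprod {k\<in>Q. m k < m j}"

(* single-qubit 2x2 matrices, indexed by (row bit, column bit) *)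
type_synonym mat2 = "bool \<Rightarrow> bool \<Rightarrow> complex"

definition Hmat :: mat2 where
  "Hmat a b = (if a \<and> b then -1 else 1) / complex_of_real (sqrt 2)"

definition Smat :: mat2 where
  "Smat a b = (if a = b then (if a then \<i> else 1) else 0)"

definition Imat :: mat2 where
  "Imat a b = (if a = b then 1 else 0)"

definition mat2_mult :: "mat2 \<Rightarrow> mat2 \<Rightarrow> mat2" where
  "mat2_mult U V = (\<lambda>a b. \<Sum>x\<in>UNIV. U a x * V x b)"

(* the single-qubit Clifford group (generated by H and S; global phases
   e^{i pi k/4} are included automatically) *)
inductive_set clifford1 :: "mat2 set" where
  cl_I: "Imat \<in> clifford1"
| cl_H: "Hmat \<in> clifford1"
| cl_S: "Smat \<in> clifford1"
| cl_mult: "U \<in> clifford1 \<Longrightarrow> V \<in> clifford1 \<Longrightarrow> mat2_mult U V \<in> clifford1"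

datatype gate =
    G1 "nat list" mat2
  | CNOT "nat list" "nat list"      (* control, target *)
  | CZ "nat list" "nat list"

fun apply_gate :: "gate \<Rightarrow> state \<Rightarrow> state" where
  "apply_gate (G1 j U) \<psi> = (\<lambda>c. \<Sum>b\<in>UNIV. U (c j) b * \<psi> (c(j := b)))"
| "apply_gate (CNOT a b) \<psi> = (\<lambda>c. \<psi> (c(b := (c b \<noteq> c a))))"
| "apply_gate (CZ a b) \<psi> = (\<lambda>c. (if c a \<and> c b then -1 else 1) * \<psi> c)"

fun gate_qubits :: "gate \<Rightarrow> nat list list" where
  "gate_qubits (G1 j U) = [j]"
| "gate_qubits (CNOT a b) = [a, b]"
| "gate_qubits (CZ a b) = [a, b]"

fun valid_gate :: "nat \<Rightarrow> nat \<Rightarrow> gate \<Rightarrow> bool" where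
  "valid_gate L d (G1 j U) \<longleftrightarrow> j \<in> sites L d \<and> U \<in> clifford1"
| "valid_gate L d (CNOT a b) \<longleftrightarrow> a \<in> sites L d \<and> b \<in> sites L d \<and> l1dist a b = 1"
| "valid_gate L d (CZ a b) \<longleftrightarrow> a \<in> sites L d \<and> b \<in> sites L d \<and> l1dist a b = 1"

(* a circuit is a list of layers; each layer consists of gates acting on
   pairwise disjoint qubits. depth = number of layers. *)
type_synonym circuit = "gate list list"

definition valid_layer :: "nat \<Rightarrow> nat \<Rightarrow> gate list \<Rightarrow> bool" where
  "valid_layer L d l \<longleftrightarrow> (\<forall>g\<in>set l. valid_gate L d g) \<and> distinct (concat (map gate_qubits l))"

definition valid_circuit :: "nat \<Rightarrow> nat \<Rightarrow> circuit \<Rightarrow> bool" where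
  "valid_circuit L d C \<longleftrightarrow> (\<forall>l\<in>set C. valid_layer L d l)"

definition depth :: "circuit \<Rightarrow> nat" where
  "depth C = length C"

definition gate_count :: "circuit \<Rightarrow> nat" where
  "gate_count C = sum_list (map length C)"

(* the unitary of the circuit: first layer applied first *)
definition apply_layer :: "gate list \<Rightarrow> state \<Rightarrow> state" where
  "apply_layer l = fold apply_gate l"

definition circuit_unitary :: "circuit \<Rightarrow> state \<Rightarrow> state" where
  "circuit_unitary C = fold apply_layer C"

(* W maps the JW encoding with ordering m to that with ordering m':
   W chi^(m)_a W^dagger = chi^(m')_a for all a, written as W chi = chi' W
   (equivalent since W is unitary). *)
definition maps_encoding ::
  "nat list set \<Rightarrow> (state \<Rightarrow> state) \<Rightarrow> (nat list \<Rightarrow> nat) \<Rightarrow> (nat list \<Rightarrow> nat) \<Rightarrow> bool" where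
  "maps_encoding Q W m m' \<longleftrightarrow>
     (\<forall>j\<in>Q. W \<circ> majX Q m j = majX Q m' j \<circ> W \<and> W \<circ> majY Q m j = majY Q m' j \<circ> W)"

end

theory Submission
  imports Defs "HOL-Library.Z2"
begin

(* All circuits built here are diagonal: they multiply each basis state c by (-1)^q(c) for a quadratic
   form q(c) = sum r(w,u) c_w c_u over GF(2). Flipping qubit j changes q by the linear form with
   coefficients r(j,u) + r(u,j), so such a phase maps the JW encoding with ordering m to the one with
   ordering m' as soon as r(j,u) + r(u,j) = [m u < m j] + [m' u < m' j] for all sites u ~= j: the
   change of q then cancels the change of the Z-string. The ordering is changed in stages: from the
   snake of sigma to the raster (lexicographic) ordering of sigma, then by adjacent transpositions of
   levels to the raster ordering of the identity hierarchy, and back to the snake of sigma' (a diagonal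
   sign is an involution). In each stage r(w,.) is the indicator of a box of sites next to w, and the
   phase is realised in depth O(L) by conjugating constant-depth layers of CZ and Z gates with sweeps
   of CNOTs that replace every bit by the parity of a quadrant of sites. *)

declare add_bit_eq_xor[simp del] mult_bit_eq_and[simp del]

section \<open>Quadratic phases and Majorana operators\<close>

abbreviation cbit :: "config \<Rightarrow> nat list \<Rightarrow> bit" where "cbit c v \<equiv> of_bool (c v)"

definition sign_bit :: "bit \<Rightarrow> complex" where "sign_bit x = (if x = 0 then 1 else -1)"

lemma bit_add_self[simp]: "(x::bit) + x = 0"
  by (cases x) (simp_all add: one_add_one)

lemma bit_mult_self: "(x::bit) * x = x"
  by (cases x) simp_all

lemma bit_eq_add_iff: "u + i = s \<longleftrightarrow> u = s + (i::bit)"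
  by (metis add.assoc add.right_neutral bit_add_self)

lemma of_bool_neq: "(of_bool (a \<noteq> b) :: bit) = of_bool a + of_bool b"
  by (cases a; cases b) simp_all

lemma sign_bit_add: "sign_bit (x + y) = sign_bit x * sign_bit y"
  by (cases x; cases y) (simp_all add: sign_bit_def one_add_one)

lemma sign_bit_square: "sign_bit x * sign_bit x = 1"
  by (cases x) (simp_all add: sign_bit_def)

lemma sign_bit_of_nat: "sign_bit (of_nat n) = (-1) ^ n"
proof (induction n)
  case (Suc n)
  have "sign_bit (of_nat (Suc n)) = sign_bit 1 * sign_bit (of_nat n)"
    by (simp only: of_nat_Suc sign_bit_add)
  with Suc show ?case by (simp add: sign_bit_def)
qed (simp add: sign_bit_def)

lemma sum_of_bool_add_mult:
  "finite Q \<Longrightarrow> (\<Sum>u\<in>Q. (of_bool (P u) + of_bool (P' u)) * (f u :: 'a::comm_semiring_1))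
   = (\<Sum>u\<in>{u\<in>Q. P u}. f u) + (\<Sum>u\<in>{u\<in>Q. P' u}. f u)"
  by (simp add: distrib_right sum.distrib Int_def)

lemma sum_sum_of_bool_eq_fst:
  "finite Q \<Longrightarrow> j \<in> Q \<Longrightarrow> (\<Sum>w\<in>Q. \<Sum>u\<in>Q. r w u * of_bool (w = j) * F u) = (\<Sum>u\<in>Q. r j u * (F u :: 'a::comm_semiring_1))"
  by (simp add: mult.commute[of _ "of_bool _"] mult.assoc sum_distrib_left[symmetric] sum.delta)

lemma sum_sum_of_bool_eq_snd:
  "finite Q \<Longrightarrow> j \<in> Q \<Longrightarrow> (\<Sum>w\<in>Q. \<Sum>u\<in>Q. r w u * F w * of_bool (u = j)) = (\<Sum>w\<in>Q. r w j * (F w :: 'a::comm_semiring_1))"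
  by (simp add: sum.delta)

definition qform :: "nat list set \<Rightarrow> (nat list \<Rightarrow> nat list \<Rightarrow> bit) \<Rightarrow> config \<Rightarrow> bit" where
  "qform Q r c = (\<Sum>w\<in>Q. \<Sum>u\<in>Q. r w u * cbit c w * cbit c u)"

lemma qform_flip:
  assumes fin: "finite Q" and j: "j \<in> Q" and rjj: "r j j = 0"
  shows "qform Q r (c(j := \<not> c j)) = qform Q r c + (\<Sum>u\<in>Q. (r j u + r u j) * cbit c u)"
proof -
  define \<delta> where "\<delta> w = (of_bool (w = j) :: bit)" for w
  have flip: "cbit (c(j := \<not> c j)) w = cbit c w + \<delta> w" for w
    by (cases "c j") (auto simp: \<delta>_def)
  have "qform Q r (c(j := \<not> c j)) = qform Q r c + (\<Sum>w\<in>Q. \<Sum>u\<in>Q. r w u * \<delta> w * cbit c u)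
      + (\<Sum>w\<in>Q. \<Sum>u\<in>Q. r w u * cbit c w * \<delta> u) + (\<Sum>w\<in>Q. \<Sum>u\<in>Q. r w u * \<delta> w * \<delta> u)"
    unfolding qform_def flip by (simp add: algebra_simps sum.distrib)
  also have "\<dots> = qform Q r c + (\<Sum>u\<in>Q. r j u * cbit c u) + (\<Sum>u\<in>Q. r u j * cbit c u) + r j j"
    using fin j unfolding \<delta>_def sum_sum_of_bool_eq_fst[OF fin j] sum_sum_of_bool_eq_snd[OF fin j]
    by (simp add: sum.delta)
  finally show ?thesis
    using rjj by (simp add: algebra_simps sum.distrib)
qed

definition phase_op :: "(config \<Rightarrow> bit) \<Rightarrow> state \<Rightarrow> state" where
  "phase_op \<phi> \<psi> = (\<lambda>c. sign_bit (\<phi> c) * \<psi> c)"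

lemma phase_op_comp: "phase_op \<chi> \<circ> phase_op \<phi> = phase_op (\<lambda>c. \<phi> c + \<chi> c)"
  by (auto simp: phase_op_def fun_eq_iff sign_bit_add)

lemma phase_op_zero: "phase_op (\<lambda>c. 0) = id"
  by (auto simp: phase_op_def fun_eq_iff sign_bit_def)

lemma phase_op_involution: "phase_op \<phi> \<circ> phase_op \<phi> = id"
  by (auto simp: phase_op_def fun_eq_iff sign_bit_square mult.assoc[symmetric])

lemma Zprod_sign_bit: "finite S \<Longrightarrow> Zprod S \<psi> = (\<lambda>c. sign_bit (\<Sum>k\<in>S. cbit c k) * \<psi> c)"
  by (simp add: Zprod_def sign_bit_of_nat Int_def)

lemma phase_op_commute_flip:
  assumes fin: "finite S" "finite S'" and j: "j \<notin> S" "j \<notin> S'"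
    and shift: "\<And>c. \<phi> (c(j := \<not> c j)) + (\<Sum>k\<in>S'. cbit c k) = \<phi> c + (\<Sum>k\<in>S. cbit c k)"
  shows "phase_op \<phi> \<circ> (PX j \<circ> Zprod S) = (PX j \<circ> Zprod S') \<circ> phase_op \<phi>"
    and "phase_op \<phi> \<circ> (PY j \<circ> Zprod S) = (PY j \<circ> Zprod S') \<circ> phase_op \<phi>"
proof -
  have unflip: "(\<Sum>k\<in>A. cbit (c(j := x)) k) = (\<Sum>k\<in>A. cbit c k)" if "j \<notin> A" for A c x
    using that by (intro sum.cong) auto
  have sign: "sign_bit (\<phi> c) * (sign_bit (\<Sum>k\<in>S. cbit c k) * z)
      = sign_bit (\<Sum>k\<in>S'. cbit c k) * (sign_bit (\<phi> (c(j := \<not> c j))) * z)" for c z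
  proof -
    have "sign_bit (\<phi> c) * sign_bit (\<Sum>k\<in>S. cbit c k)
        = sign_bit (\<Sum>k\<in>S'. cbit c k) * sign_bit (\<phi> (c(j := \<not> c j)))"
      using arg_cong[OF shift[of c], of sign_bit] by (simp only: sign_bit_add mult.commute)
    then show ?thesis by (simp only: mult.assoc[symmetric])
  qed
  have sign': "sign_bit (\<phi> c) * (f * (sign_bit (\<Sum>k\<in>S. cbit c k) * z))
      = f * (sign_bit (\<Sum>k\<in>S'. cbit c k) * (sign_bit (\<phi> (c(j := \<not> c j))) * z))" for c f z
    by (simp only: mult.left_commute[of "sign_bit (\<phi> c)" f] sign)
  show "phase_op \<phi> \<circ> (PX j \<circ> Zprod S) = (PX j \<circ> Zprod S') \<circ> phase_op \<phi>"
    unfolding fun_eq_iff comp_apply phase_op_def PX_def Zprod_sign_bit[OF fin(1)]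
      Zprod_sign_bit[OF fin(2)] unflip[OF j(1)] unflip[OF j(2)] sign by simp
  show "phase_op \<phi> \<circ> (PY j \<circ> Zprod S) = (PY j \<circ> Zprod S') \<circ> phase_op \<phi>"
    unfolding fun_eq_iff comp_apply phase_op_def PY_def Zprod_sign_bit[OF fin(1)]
      Zprod_sign_bit[OF fin(2)] unflip[OF j(1)] unflip[OF j(2)] sign' by simp
qed

lemma maps_encoding_phase_qform:
  assumes fin: "finite Q"
    and rjj: "\<And>j. j \<in> Q \<Longrightarrow> r j j = 0"
    and pw: "\<And>j u. j \<in> Q \<Longrightarrow> u \<in> Q \<Longrightarrow> u \<noteq> j \<Longrightarrow>
              r j u + r u j = of_bool (m u < m j) + of_bool (m' u < m' j)"
  shows "maps_encoding Q (phase_op (qform Q r)) m m'"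
  unfolding maps_encoding_def majX_def majY_def
proof (intro ballI conjI)
  fix j assume j: "j \<in> Q"
  define S where "S = {k\<in>Q. m k < m j}"
  define S' where "S' = {k\<in>Q. m' k < m' j}"
  have "(\<Sum>u\<in>Q. (r j u + r u j) * cbit c u) = (\<Sum>k\<in>S. cbit c k) + (\<Sum>k\<in>S'. cbit c k)" for c
  proof -
    have "(\<Sum>u\<in>Q. (r j u + r u j) * cbit c u)
        = (\<Sum>u\<in>Q. (of_bool (m u < m j) + of_bool (m' u < m' j)) * cbit c u)"
    proof (rule sum.cong[OF refl])
      fix u assume "u \<in> Q"
      then show "(r j u + r u j) * cbit c u = (of_bool (m u < m j) + of_bool (m' u < m' j)) * cbit c u"
        using pw[OF j] rjj[OF j] by (cases "u = j") auto
    qed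
    then show ?thesis
      unfolding sum_of_bool_add_mult[OF fin] S_def S'_def .
  qed
  then have shift: "qform Q r (c(j := \<not> c j)) + (\<Sum>k\<in>S'. cbit c k) = qform Q r c + (\<Sum>k\<in>S. cbit c k)" for c
    unfolding qform_flip[where r = r, OF fin j rjj[OF j]] by (simp add: add.assoc)
  have fS: "finite S" "finite S'" and jS: "j \<notin> S" "j \<notin> S'"
    using fin by (auto simp: S_def S'_def)
  show "phase_op (qform Q r) \<circ> (PX j \<circ> Zprod S) = (PX j \<circ> Zprod S') \<circ> phase_op (qform Q r)"
    and "phase_op (qform Q r) \<circ> (PY j \<circ> Zprod S) = (PY j \<circ> Zprod S') \<circ> phase_op (qform Q r)"
    using phase_op_commute_flip[OF fS jS shift] .
qed

section \<open>Circuits of CNOT and diagonal gates\<close>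

fun cnot_step :: "gate \<Rightarrow> config \<Rightarrow> config" where
  "cnot_step (CNOT a b) c = c(b := (c b \<noteq> c a))"
| "cnot_step (G1 j U) c = c"
| "cnot_step (CZ a b) c = c"

definition cnot_run :: "gate list \<Rightarrow> config \<Rightarrow> config" where "cnot_run gs c = fold cnot_step gs c"

definition Zmat :: mat2 where "Zmat = mat2_mult Smat Smat"

fun gate_phase :: "gate \<Rightarrow> config \<Rightarrow> bit" where
  "gate_phase (CZ a b) c = of_bool (c a \<and> c b)"
| "gate_phase (G1 j U) c = of_bool (c j)"
| "gate_phase (CNOT a b) c = 0"

fun diag_gate :: "gate \<Rightarrow> bool" where
  "diag_gate (CZ a b) = True"
| "diag_gate (G1 j U) = (U = Zmat)"
| "diag_gate (CNOT a b) = False"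

fun cnot_gate :: "gate \<Rightarrow> bool" where
  "cnot_gate (CNOT a b) = (a \<noteq> b)"
| "cnot_gate (G1 j U) = False"
| "cnot_gate (CZ a b) = False"

definition implements_phase :: "gate list \<Rightarrow> (config \<Rightarrow> bit) \<Rightarrow> bool" where
  "implements_phase gs \<phi> \<longleftrightarrow> fold apply_gate gs = phase_op \<phi>"

lemma circuit_unitary_concat: "circuit_unitary C = fold apply_gate (concat C)"
  unfolding circuit_unitary_def apply_layer_def
  by (induction C) auto

lemma Zmat_clifford: "Zmat \<in> clifford1"
  unfolding Zmat_def by (intro cl_mult cl_S)

lemma Zmat_eq: "Zmat a b = (if a = b then (if a then -1 else 1) else 0)"
  by (cases a; cases b) (simp_all add: Zmat_def mat2_mult_def Smat_def UNIV_bool)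

lemma apply_diag_gate: "diag_gate g \<Longrightarrow> apply_gate g = phase_op (gate_phase g)"
proof (cases g)
  case (G1 j U)
  assume "diag_gate g"
  then have U: "U = Zmat" using G1 by simp
  show ?thesis
  proof (rule ext, rule ext)
    fix \<psi> c
    show "apply_gate g \<psi> c = phase_op (gate_phase g) \<psi> c"
      using G1 U by (cases "c j") (simp_all add: UNIV_bool Zmat_eq phase_op_def sign_bit_def fun_upd_idem)
  qed
next
  case (CZ a b)
  then show ?thesis by (auto simp: phase_op_def sign_bit_def fun_eq_iff)
qed simp

lemma implements_phase_Nil: "implements_phase [] (\<lambda>c. 0)"
  by (simp add: implements_phase_def phase_op_zero id_def)

lemma implements_phase_append:
  "implements_phase A \<phi> \<Longrightarrow> implements_phase B \<chi> \<Longrightarrow> implements_phase (A @ B) (\<lambda>c. \<phi> c + \<chi> c)"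
  unfolding implements_phase_def by (simp add: fold_append phase_op_comp)

lemma implements_phase_cong: "implements_phase A \<phi> \<Longrightarrow> (\<And>c. \<phi> c = \<chi> c) \<Longrightarrow> implements_phase A \<chi>"
proof -
  assume "implements_phase A \<phi>" "\<And>c. \<phi> c = \<chi> c"
  then have "\<phi> = \<chi>" by auto
  then show "implements_phase A \<chi>" using \<open>implements_phase A \<phi>\<close> by simp
qed

lemma implements_phase_diag_gates:
  "\<forall>g\<in>set gs. diag_gate g \<Longrightarrow> implements_phase gs (\<lambda>c. \<Sum>g\<leftarrow>gs. gate_phase g c)"
proof (induction gs rule: rev_induct)
  case Nil
  then show ?case using implements_phase_Nil by simp
next
  case (snoc g gs)
  have "implements_phase [g] (gate_phase g)" using snoc.prems by (simp add: implements_phase_def apply_diag_gate)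
  from implements_phase_append[OF snoc.IH this] snoc.prems show ?case by simp
qed

lemma implements_phase_CZ_layer:
  "distinct ws \<Longrightarrow> implements_phase (map (\<lambda>w. CZ (f w) (g w)) ws) (\<lambda>c. \<Sum>w\<in>set ws. cbit c (f w) * cbit c (g w))"
  using implements_phase_diag_gates[of "map (\<lambda>w. CZ (f w) (g w)) ws"]
  by (simp add: o_def of_bool_conj sum_list_distinct_conv_sum_set)

lemma implements_phase_Z_layer:
  "distinct ws \<Longrightarrow> implements_phase (map (\<lambda>w. G1 (f w) Zmat) ws) (\<lambda>c. \<Sum>w\<in>set ws. cbit c (f w))"
  using implements_phase_diag_gates[of "map (\<lambda>w. G1 (f w) Zmat) ws"]
  by (simp add: o_def sum_list_distinct_conv_sum_set)

lemma fold_cnot_gates: "\<forall>g\<in>set A. cnot_gate g \<Longrightarrow> fold apply_gate A \<psi> = \<psi> \<circ> cnot_run (rev A)"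
proof (induction A arbitrary: \<psi>)
  case Nil
  then show ?case by (simp add: cnot_run_def)
next
  case (Cons g A)
  then obtain a b where g: "g = CNOT a b" by (cases g) auto
  have "fold apply_gate (g # A) \<psi> = fold apply_gate A (\<psi> \<circ> cnot_step g)"
    using g by (simp add: comp_def)
  also have "\<dots> = \<psi> \<circ> cnot_step g \<circ> cnot_run (rev A)" using Cons by (simp add: comp_def)
  also have "\<dots> = \<psi> \<circ> cnot_run (rev (g # A))" by (simp add: cnot_run_def fun_eq_iff)
  finally show ?case .
qed

lemma cnot_step_involution: "cnot_gate g \<Longrightarrow> cnot_step g (cnot_step g c) = c"
  by (cases g) (auto simp: fun_eq_iff)

lemma cnot_run_rev: "\<forall>g\<in>set A. cnot_gate g \<Longrightarrow> cnot_run (rev A) (cnot_run A c) = c"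
proof (induction A arbitrary: c)
  case Nil
  then show ?case by (simp add: cnot_run_def)
next
  case (Cons g A)
  have "cnot_run (rev (g # A)) (cnot_run (g # A) c) = cnot_step g (cnot_run (rev A) (cnot_run A (cnot_step g c)))"
    by (simp add: cnot_run_def)
  also have "\<dots> = c" using Cons by (simp add: cnot_step_involution)
  finally show ?case .
qed

lemma implements_phase_conjugate:
  assumes A: "\<forall>g\<in>set A. cnot_gate g" and D: "implements_phase D \<phi>"
  shows "implements_phase (A @ D @ rev A) (\<lambda>c. \<phi> (cnot_run A c))"
  unfolding implements_phase_def
proof (rule ext)
  fix \<psi>
  have A': "\<forall>g\<in>set (rev A). cnot_gate g" using A by simp
  have "fold apply_gate (A @ D @ rev A) \<psi> = fold apply_gate (rev A) (phase_op \<phi> (\<psi> \<circ> cnot_run (rev A)))"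
    using D by (simp add: implements_phase_def fold_cnot_gates[OF A])
  also have "\<dots> = phase_op \<phi> (\<psi> \<circ> cnot_run (rev A)) \<circ> cnot_run A"
    using fold_cnot_gates[OF A'] by simp
  also have "\<dots> = phase_op (\<lambda>c. \<phi> (cnot_run A c)) \<psi>"
    by (simp add: phase_op_def fun_eq_iff cnot_run_rev[OF A])
  finally show "fold apply_gate (A @ D @ rev A) \<psi> = phase_op (\<lambda>c. \<phi> (cnot_run A c)) \<psi>" .
qed

definition rev_circuit :: "circuit \<Rightarrow> circuit" where "rev_circuit C = rev (map rev C)"

lemma concat_rev_circuit: "concat (rev_circuit C) = rev (concat C)"
  by (simp add: rev_circuit_def rev_concat rev_map)

lemma valid_circuit_append: "valid_circuit L d (A @ B) \<longleftrightarrow> valid_circuit L d A \<and> valid_circuit L d B"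
  by (auto simp: valid_circuit_def)

lemma valid_layer_rev: "valid_layer L d l \<Longrightarrow> valid_layer L d (rev l)"
proof -
  assume v: "valid_layer L d l"
  have "distinct (concat (map gate_qubits (rev l)))"
  proof -
    have e1: "set (concat (map gate_qubits (rev l))) = set (concat (map gate_qubits l))" by auto
    have e2: "length (concat (map gate_qubits (rev l))) = length (concat (map gate_qubits l))"
      by (simp add: length_concat rev_map[symmetric] sum_list_rev)
    have "card (set (concat (map gate_qubits l))) = length (concat (map gate_qubits l))"
      using v unfolding valid_layer_def by (intro distinct_card) simp
    then show ?thesis using e1 e2 by (intro card_distinct) simp
  qed
  then show ?thesis using v by (simp add: valid_layer_def)
qed

lemma valid_circuit_rev_circuit: "valid_circuit L d C \<Longrightarrow> valid_circuit L d (rev_circuit C)"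
  by (auto simp: valid_circuit_def rev_circuit_def intro: valid_layer_rev)

lemma depth_append: "depth (A @ B) = depth A + depth B" by (simp add: depth_def)
lemma depth_rev_circuit: "depth (rev_circuit C) = depth C" by (simp add: depth_def rev_circuit_def)
lemma gate_count_append: "gate_count (A @ B) = gate_count A + gate_count B" by (simp add: gate_count_def)
lemma gate_count_rev_circuit: "gate_count (rev_circuit C) = gate_count C"
  by (simp add: gate_count_def rev_circuit_def rev_map[symmetric] sum_list_rev o_def)

lemma circuit_unitary_append: "circuit_unitary (A @ B) = circuit_unitary B \<circ> circuit_unitary A"
  by (simp add: circuit_unitary_concat fold_append)

lemma maps_encoding_trans:
  "maps_encoding Q W1 m m' \<Longrightarrow> maps_encoding Q W2 m' m'' \<Longrightarrow> maps_encoding Q (W2 \<circ> W1) m m''"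
  unfolding maps_encoding_def
proof (intro ballI conjI)
  fix j assume j: "j \<in> Q"
  assume a: "\<forall>j\<in>Q. W1 \<circ> majX Q m j = majX Q m' j \<circ> W1 \<and> W1 \<circ> majY Q m j = majY Q m' j \<circ> W1"
    and b: "\<forall>j\<in>Q. W2 \<circ> majX Q m' j = majX Q m'' j \<circ> W2 \<and> W2 \<circ> majY Q m' j = majY Q m'' j \<circ> W2"
  have "W2 \<circ> W1 \<circ> majX Q m j = W2 \<circ> (W1 \<circ> majX Q m j)" by (simp only: comp_assoc)
  also have "\<dots> = (W2 \<circ> majX Q m' j) \<circ> W1" using a j by (simp only: comp_assoc)
  also have "\<dots> = majX Q m'' j \<circ> (W2 \<circ> W1)" using b j by (simp only: comp_assoc)
  finally show "W2 \<circ> W1 \<circ> majX Q m j = majX Q m'' j \<circ> (W2 \<circ> W1)" .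
  have "W2 \<circ> W1 \<circ> majY Q m j = W2 \<circ> (W1 \<circ> majY Q m j)" by (simp only: comp_assoc)
  also have "\<dots> = (W2 \<circ> majY Q m' j) \<circ> W1" using a j by (simp only: comp_assoc)
  also have "\<dots> = majY Q m'' j \<circ> (W2 \<circ> W1)" using b j by (simp only: comp_assoc)
  finally show "W2 \<circ> W1 \<circ> majY Q m j = majY Q m'' j \<circ> (W2 \<circ> W1)" .
qed

lemma maps_encoding_sym:
  assumes inv: "W \<circ> W = id" and me: "maps_encoding Q W m m'"
  shows "maps_encoding Q W m' m"
  unfolding maps_encoding_def
proof (intro ballI conjI)
  fix j assume j: "j \<in> Q"
  have x: "W \<circ> majX Q m j = majX Q m' j \<circ> W" and y: "W \<circ> majY Q m j = majY Q m' j \<circ> W"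
    using me j by (auto simp: maps_encoding_def)
  have "W \<circ> majX Q m' j = W \<circ> majX Q m' j \<circ> (W \<circ> W)" using inv by simp
  also have "\<dots> = W \<circ> (W \<circ> majX Q m j) \<circ> W" using x by (simp add: comp_assoc)
  also have "\<dots> = majX Q m j \<circ> W" using inv by (simp add: comp_assoc[symmetric])
  finally show "W \<circ> majX Q m' j = majX Q m j \<circ> W" .
  have "W \<circ> majY Q m' j = W \<circ> majY Q m' j \<circ> (W \<circ> W)" using inv by simp
  also have "\<dots> = W \<circ> (W \<circ> majY Q m j) \<circ> W" using y by (simp add: comp_assoc)
  also have "\<dots> = majY Q m j \<circ> W" using inv by (simp add: comp_assoc[symmetric])
  finally show "W \<circ> majY Q m' j = majY Q m j \<circ> W" .
qed

lemma cnot_run_append: "cnot_run (A @ B) c = cnot_run B (cnot_run A c)" by (simp add: cnot_run_def)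
lemma cnot_run_concat: "cnot_run (concat ls) c = fold cnot_run ls c"
  by (induction ls arbitrary: c) (simp_all add: cnot_run_def)

lemma cnot_run_layer:
  assumes "distinct (map g ws)" and "\<forall>w\<in>set ws. f w \<notin> g ` set ws"
  shows "cnot_run (map (\<lambda>w. CNOT (f w) (g w)) ws) x = (\<lambda>v. x v \<noteq> (\<exists>w\<in>set ws. g w = v \<and> x (f w)))"
  using assms
proof (induction ws arbitrary: x)
  case Nil
  then show ?case by (simp add: cnot_run_def)
next
  case (Cons w0 ws)
  have "cnot_run (map (\<lambda>w. CNOT (f w) (g w)) (w0 # ws)) x
      = cnot_run (map (\<lambda>w. CNOT (f w) (g w)) ws) (x(g w0 := (x (g w0) \<noteq> x (f w0))))"
    by (simp add: cnot_run_def)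
  also have "\<dots> = (\<lambda>v. (x(g w0 := (x (g w0) \<noteq> x (f w0)))) v
      \<noteq> (\<exists>w\<in>set ws. g w = v \<and> (x(g w0 := (x (g w0) \<noteq> x (f w0)))) (f w)))"
    using Cons by (intro Cons.IH) auto
  finally show ?case using Cons.prems by (auto simp: fun_eq_iff image_iff)
qed

lemma cnot_run_layer_target:
  assumes "distinct (map g ws)" "\<forall>w\<in>set ws. f w \<notin> g ` set ws" "v \<in> set ws"
  shows "cnot_run (map (\<lambda>w. CNOT (f w) (g w)) ws) x (g v) = (x (g v) \<noteq> x (f v))"
  using assms by (auto simp: cnot_run_layer distinct_map dest: inj_onD)

lemma cnot_run_layer_other:
  assumes "distinct (map g ws)" "\<forall>w\<in>set ws. f w \<notin> g ` set ws" "v \<notin> g ` set ws"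
  shows "cnot_run (map (\<lambda>w. CNOT (f w) (g w)) ws) x v = x v"
  using assms by (auto simp: cnot_run_layer)

section \<open>Lattice sites and parity sweeps\<close>

definition site_list :: "nat \<Rightarrow> nat \<Rightarrow> nat list list" where "site_list L d = List.n_lists d [0..<L]"

lemma set_site_list: "set (site_list L d) = sites L d"
  by (auto simp: site_list_def set_n_lists sites_def)

lemma distinct_site_list: "distinct (site_list L d)"
  by (simp add: site_list_def distinct_n_lists)

lemma length_site_list: "length (site_list L d) = L ^ d"
  by (simp add: site_list_def length_n_lists)

lemma finite_sites[simp]: "finite (sites L d)"
  by (simp flip: set_site_list)

lemma in_sites: "v \<in> sites L d \<longleftrightarrow> length v = d \<and> (\<forall>i<d. v ! i < L)"
  by (auto simp: sites_def all_set_conv_all_nth)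

lemma sites_upd: "v \<in> sites L d \<Longrightarrow> s < L \<Longrightarrow> v[p := s] \<in> sites L d"
  unfolding sites_def using set_update_subset_insert[of v p s] by auto

lemma distinct_pairs:
  "distinct (map f ws) \<Longrightarrow> distinct (map g ws) \<Longrightarrow> f ` set ws \<inter> g ` set ws = {}
   \<Longrightarrow> distinct (concat (map (\<lambda>w. [f w, g w]) ws))"
proof (induction ws)
  case Nil
  then show ?case by simp
next
  case (Cons w ws)
  have "set (concat (map (\<lambda>w. [f w, g w]) ws)) = f ` set ws \<union> g ` set ws" by auto
  then show ?case using Cons by auto
qed

lemma sum_filter_lengths:
  assumes "distinct ks" "distinct xs"
    and ex: "\<And>k k' v. k \<in> set ks \<Longrightarrow> k' \<in> set ks \<Longrightarrow> P k v \<Longrightarrow> P k' v \<Longrightarrow> k = k'"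
  shows "sum_list (map (\<lambda>k. length (filter (P k) xs)) ks) \<le> length xs"
proof -
  have d: "distinct (concat (map (\<lambda>k. filter (P k) xs) ks))"
    using assms
  proof (induction ks)
    case Nil then show ?case by simp
  next
    case (Cons k ks)
    have "distinct (concat (map (\<lambda>k. filter (P k) xs) ks))"
      using Cons by (intro Cons.IH) auto
    moreover have "set (filter (P k) xs) \<inter> set (concat (map (\<lambda>k. filter (P k) xs) ks)) = {}"
      using Cons.prems(1) Cons.prems(3)[of k] by fastforce
    ultimately show ?case using Cons.prems by simp
  qed
  have "sum_list (map (\<lambda>k. length (filter (P k) xs)) ks) = length (concat (map (\<lambda>k. filter (P k) xs) ks))"
    by (simp add: length_concat o_def)
  also have "\<dots> = card (set (concat (map (\<lambda>k. filter (P k) xs) ks)))"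
    using distinct_card[OF d] by simp
  also have "\<dots> \<le> card (set xs)" by (intro card_mono) auto
  also have "\<dots> = length xs" using distinct_card[OF assms(2)] by simp
  finally show ?thesis .
qed

definition orient :: "bool \<Rightarrow> nat \<Rightarrow> nat \<Rightarrow> nat" where
  "orient dir L t = (if dir then t else L - 1 - t)"

definition dir_le :: "bool \<Rightarrow> nat \<Rightarrow> nat \<Rightarrow> bool" where
  "dir_le dir s t = (if dir then s \<le> t else t \<le> s)"

lemma orient_less: "t < L \<Longrightarrow> orient dir L t < L" by (auto simp: orient_def)
lemma orient_orient: "t < L \<Longrightarrow> orient dir L (orient dir L t) = t" by (auto simp: orient_def)
lemma orient_eq_iff: "s < L \<Longrightarrow> t < L \<Longrightarrow> orient dir L s = orient dir L t \<longleftrightarrow> s = t" by (auto simp: orient_def)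

lemma sum_orient_atMost:
  assumes "t < L"
  shows "(\<Sum>i\<le>orient dir L t. f (orient dir L i)) = (\<Sum>s\<in>{s. s < L \<and> dir_le dir s t}. f s)"
proof (rule sum.reindex_bij_witness[where i = "orient dir L" and j = "orient dir L"])
  show "orient dir L (orient dir L s) = s" if "s \<in> {s. s < L \<and> dir_le dir s t}" for s
    using that by (simp add: orient_orient)
  show "orient dir L s \<in> {..orient dir L t}" if "s \<in> {s. s < L \<and> dir_le dir s t}" for s
    using that assms by (auto simp: orient_def dir_le_def)
  show "orient dir L (orient dir L i) = i" and "orient dir L i \<in> {s. s < L \<and> dir_le dir s t}"
    if "i \<in> {..orient dir L t}" for i
    using that assms by (auto simp: orient_def dir_le_def)
qed simp

definition sweep_layer :: "nat \<Rightarrow> nat \<Rightarrow> nat \<Rightarrow> bool \<Rightarrow> nat \<Rightarrow> gate list" where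
  "sweep_layer L d p dir k = map (\<lambda>v. CNOT (v[p := orient dir L (k - 1)]) v)
       (filter (\<lambda>v. v ! p = orient dir L k) (site_list L d))"

definition sweep :: "nat \<Rightarrow> nat \<Rightarrow> nat \<Rightarrow> bool \<Rightarrow> circuit" where
  "sweep L d p dir = map (sweep_layer L d p dir) [1..<L]"

definition sweeps :: "nat \<Rightarrow> nat \<Rightarrow> (nat \<times> bool) list \<Rightarrow> circuit" where
  "sweeps L d axs = concat (map (\<lambda>(p, dir). sweep L d p dir) axs)"

lemma cnot_run_sweep_layer:
  assumes p: "p < d" and k: "1 \<le> k" "k < L" and v: "v \<in> sites L d"
  shows "cnot_run (sweep_layer L d p dir k) y v =
     (if v ! p = orient dir L k then (y v \<noteq> y (v[p := orient dir L (k - 1)])) else y v)"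
proof -
  define ws where "ws = filter (\<lambda>v. v ! p = orient dir L k) (site_list L d)"
  have ne: "orient dir L (k - 1) \<noteq> orient dir L k" using k by (simp add: orient_eq_iff)
  have dist: "distinct (map (\<lambda>w. w) ws)" using distinct_site_list by (simp add: ws_def)
  have ctl: "\<forall>w\<in>set ws. w[p := orient dir L (k - 1)] \<notin> (\<lambda>w. w) ` set ws"
    using ne p by (auto simp: ws_def set_site_list in_sites)
  have "sweep_layer L d p dir k = map (\<lambda>w. CNOT (w[p := orient dir L (k - 1)]) w) ws"
    by (simp add: sweep_layer_def ws_def)
  moreover have "v \<in> set ws \<longleftrightarrow> v ! p = orient dir L k" using v by (simp add: ws_def set_site_list)
  ultimately show ?thesis using cnot_run_layer[OF dist ctl] by auto
qed

lemma cnot_run_sweep_prefix: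
  assumes p: "p < d" and k: "k < L" and v: "v \<in> sites L d"
  shows "cbit (fold cnot_run (map (sweep_layer L d p dir) [1..<Suc k]) x) v =
     (if orient dir L (v ! p) \<le> k then (\<Sum>i\<le>orient dir L (v ! p). cbit x (v[p := orient dir L i]))
      else cbit x v)"
  using k v
proof (induction k arbitrary: v)
  case 0
  have vp: "v ! p < L" using 0 p by (simp add: in_sites)
  show ?case
  proof (cases "orient dir L (v ! p) = 0")
    case True
    then have "orient dir L 0 = v ! p" using vp by (metis orient_orient)
    then show ?thesis using True by (simp del: sum_of_bool_eq)
  qed simp
next
  case (Suc k)
  define R where "R = fold cnot_run (map (sweep_layer L d p dir) [1..<Suc k]) x"
  have vp: "v ! p < L" using Suc.prems p by (simp add: in_sites)
  have step: "cbit (fold cnot_run (map (sweep_layer L d p dir) [1..<Suc (Suc k)]) x) v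
      = (if v ! p = orient dir L (Suc k) then cbit R v + cbit R (v[p := orient dir L k]) else cbit R v)"
    using cnot_run_sweep_layer[OF p _ Suc.prems] by (simp add: R_def of_bool_neq)
  show ?case
  proof (cases "v ! p = orient dir L (Suc k)")
    case True
    then have ov: "orient dir L (v ! p) = Suc k" using Suc.prems by (simp add: orient_orient)
    have u: "v[p := orient dir L k] \<in> sites L d"
      using Suc.prems by (simp add: sites_upd orient_less)
    have up: "orient dir L (v[p := orient dir L k] ! p) = k"
      using Suc.prems p by (simp add: orient_less orient_orient in_sites)
    have "cbit R (v[p := orient dir L k]) = (\<Sum>i\<le>k. cbit x (v[p := orient dir L i]))"
      using Suc.IH[OF _ u] Suc.prems up by (simp add: R_def)
    moreover have "cbit R v = cbit x v" using Suc.IH[of v] Suc.prems ov by (simp add: R_def)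
    moreover have "(\<Sum>i\<le>Suc k. cbit x (v[p := orient dir L i]))
        = cbit x v + (\<Sum>i\<le>k. cbit x (v[p := orient dir L i]))"
      using True[symmetric] by (simp add: add.commute del: sum_of_bool_eq)
    ultimately show ?thesis using step True ov by (simp del: sum_of_bool_eq)
  next
    case False
    then have "orient dir L (v ! p) \<noteq> Suc k" using vp by (metis orient_orient)
    then show ?thesis using step False Suc.IH[of v] Suc.prems by (simp add: R_def)
  qed
qed

lemma cnot_run_sweep:
  assumes p: "p < d" and v: "v \<in> sites L d"
  shows "cbit (cnot_run (concat (sweep L d p dir)) x) v = (\<Sum>s\<in>{s. s < L \<and> dir_le dir s (v ! p)}. cbit x (v[p := s]))"
proof -
  have vp: "v ! p < L" using v p by (simp add: in_sites)
  then have "Suc (L - 1) = L" by simp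
  then have "cnot_run (concat (sweep L d p dir)) x = fold cnot_run (map (sweep_layer L d p dir) [1..<Suc (L - 1)]) x"
    by (simp only: sweep_def cnot_run_concat)
  moreover have "orient dir L (v ! p) \<le> L - 1" using orient_less[OF vp, of dir] by simp
  ultimately show ?thesis
    using cnot_run_sweep_prefix[OF p _ v, of "L - 1"] vp
      sum_orient_atMost[OF vp, where dir = dir and f = "\<lambda>s. cbit x (v[p := s])"]
    by (simp del: sum_of_bool_eq)
qed

definition sweep_rel :: "(nat \<times> bool) list \<Rightarrow> nat \<Rightarrow> nat \<Rightarrow> nat \<Rightarrow> bool" where
  "sweep_rel axs q a b = (case map_of axs q of None \<Rightarrow> a = b | Some dir \<Rightarrow> dir_le dir a b)"

definition sweep_region :: "nat \<Rightarrow> nat \<Rightarrow> (nat \<times> bool) list \<Rightarrow> nat list \<Rightarrow> nat list set" where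
  "sweep_region L d axs v = {u\<in>sites L d. \<forall>q<d. sweep_rel axs q (u ! q) (v ! q)}"

lemma sweep_region_snoc:
  assumes p: "p < d" "map_of axs p = None" and v: "length v = d" and s: "dir_le dir s (v ! p)"
  shows "sweep_region L d axs (v[p := s]) = {u\<in>sweep_region L d (axs @ [(p, dir)]) v. u ! p = s}"
proof -
  have "sweep_rel (axs @ [(p, dir)]) q = (if q = p then dir_le dir else sweep_rel axs q)" for q
    using p by (auto simp: sweep_rel_def map_add_def fun_eq_iff split: option.splits)
  moreover have "sweep_rel axs p a b = (a = b)" for a b
    using p by (simp add: sweep_rel_def)
  ultimately show ?thesis
    using p v s unfolding sweep_region_def by (auto simp: nth_list_update)
qed

lemma cnot_run_sweeps:
  assumes "distinct (map fst axs)" "\<forall>a\<in>set axs. fst a < d" "v \<in> sites L d"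
  shows "cbit (cnot_run (concat (sweeps L d axs)) x) v = (\<Sum>u\<in>sweep_region L d axs v. cbit x u)"
  using assms
proof (induction axs arbitrary: v rule: rev_induct)
  case Nil
  then have "sweep_region L d [] v = {v}"
    by (auto simp: sweep_region_def sweep_rel_def in_sites intro: nth_equalityI)
  then show ?case by (simp add: sweeps_def cnot_run_def)
next
  case (snoc a axs)
  obtain p dir where a: "a = (p, dir)" by (cases a)
  have p: "p < d" "map_of axs p = None" and axs: "distinct (map fst axs)" "\<forall>a\<in>set axs. fst a < d"
    using snoc.prems by (auto simp: a map_of_eq_None_iff)
  have lv: "length v = d" using snoc.prems by (simp add: in_sites)
  define R where "R = cnot_run (concat (sweeps L d axs)) x"
  have "cbit (cnot_run (concat (sweeps L d (axs @ [a]))) x) v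
      = (\<Sum>s\<in>{s. s < L \<and> dir_le dir s (v ! p)}. cbit R (v[p := s]))"
    using cnot_run_sweep[OF p(1) snoc.prems(3)] by (simp add: sweeps_def R_def cnot_run_append a)
  also have "\<dots> = (\<Sum>s\<in>{s. s < L \<and> dir_le dir s (v ! p)}.
      \<Sum>u\<in>{u\<in>sweep_region L d (axs @ [a]) v. u ! p = s}. cbit x u)"
  proof (rule sum.cong[OF refl])
    fix s assume s: "s \<in> {s. s < L \<and> dir_le dir s (v ! p)}"
    then have "v[p := s] \<in> sites L d" using snoc.prems(3) by (simp add: sites_upd)
    then show "cbit R (v[p := s]) = (\<Sum>u\<in>{u\<in>sweep_region L d (axs @ [a]) v. u ! p = s}. cbit x u)"
      using snoc.IH[OF axs] sweep_region_snoc[OF p lv, of dir s] s by (simp add: R_def a)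
  qed
  also have "\<dots> = (\<Sum>u\<in>sweep_region L d (axs @ [a]) v. cbit x u)"
  proof (rule sum.group)
    show "(\<lambda>u. u ! p) ` sweep_region L d (axs @ [a]) v \<subseteq> {s. s < L \<and> dir_le dir s (v ! p)}"
      using p by (auto simp: sweep_region_def sweep_rel_def a map_add_def in_sites)
  qed (simp_all add: sweep_region_def)
  finally show ?case .
qed

lemma l1dist_one:
  assumes "length u = length v" "p < length v" "\<And>i. i < length v \<Longrightarrow> i \<noteq> p \<Longrightarrow> u ! i = v ! i"
  shows "l1dist u v = nat \<bar>int (u ! p) - int (v ! p)\<bar>"
proof -
  have "l1dist u v = (\<Sum>i<length v. if i = p then nat \<bar>int (u ! p) - int (v ! p)\<bar> else 0)"
    unfolding l1dist_def using assms by (intro sum.cong) auto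
  also have "\<dots> = nat \<bar>int (u ! p) - int (v ! p)\<bar>" using assms by (simp add: sum.delta)
  finally show ?thesis .
qed

lemma valid_layer_pairs:
  assumes "G = CNOT \<or> G = CZ"
    and "\<forall>w\<in>set ws. f w \<in> sites L d \<and> g w \<in> sites L d \<and> l1dist (f w) (g w) = 1"
    and "distinct (map f ws)" "distinct (map g ws)" "f ` set ws \<inter> g ` set ws = {}"
  shows "valid_layer L d (map (\<lambda>w. G (f w) (g w)) ws)"
proof -
  have "concat (map gate_qubits (map (\<lambda>w. G (f w) (g w)) ws)) = concat (map (\<lambda>w. [f w, g w]) ws)"
    using assms(1) by (auto simp: o_def)
  then show ?thesis using assms distinct_pairs[of f ws g] by (auto simp: valid_layer_def)
qed

lemma valid_layer_Z:
  assumes "\<forall>w\<in>set ws. f w \<in> sites L d" "distinct (map f ws)"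
  shows "valid_layer L d (map (\<lambda>w. G1 (f w) Zmat) ws)"
proof -
  have "concat (map gate_qubits (map (\<lambda>w. G1 (f w) Zmat) ws)) = map f ws"
    by (induction ws) auto
  then show ?thesis using assms Zmat_clifford by (auto simp: valid_layer_def)
qed

lemma valid_sweep_layer:
  assumes p: "p < d" and k: "1 \<le> k" "k < L"
  shows "valid_layer L d (sweep_layer L d p dir k)"
proof -
  define ws where "ws = filter (\<lambda>v. v ! p = orient dir L k) (site_list L d)"
  define ctl where "ctl v = v[p := orient dir L (k - 1)]" for v
  have ws: "v \<in> sites L d" "length v = d" "v ! p = orient dir L k" if "v \<in> set ws" for v
    using that by (auto simp: ws_def set_site_list in_sites)
  have dws: "distinct ws" using distinct_site_list by (simp add: ws_def)
  have ne: "orient dir L (k - 1) \<noteq> orient dir L k" using k by (simp add: orient_eq_iff)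
  have "l1dist (ctl v) v = 1" if "v \<in> set ws" for v
    using l1dist_one[of "ctl v" v p] ws[OF that] p k by (auto simp: ctl_def orient_def)
  moreover have "inj_on ctl (set ws)"
  proof (rule inj_onI)
    fix x y assume "x \<in> set ws" "y \<in> set ws" "ctl x = ctl y"
    then show "x = y" using ws(3) by (metis ctl_def list_update_id list_update_overwrite)
  qed
  moreover have "ctl x \<noteq> y" if "x \<in> set ws" "y \<in> set ws" for x y
    using ws[OF that(1)] ws[OF that(2)] ne p arg_cong[where f = "\<lambda>v. v ! p"] by (fastforce simp: ctl_def)
  then have "ctl ` set ws \<inter> (\<lambda>v. v) ` set ws = {}" by blast
  moreover have "ctl v \<in> sites L d" if "v \<in> set ws" for v
    using ws[OF that] k by (simp add: ctl_def sites_upd orient_less)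
  ultimately have "valid_layer L d (map (\<lambda>v. CNOT (ctl v) v) ws)"
    using ws dws by (intro valid_layer_pairs) (auto simp: distinct_map)
  then show ?thesis by (simp add: sweep_layer_def ws_def ctl_def)
qed

lemma valid_sweep: "p < d \<Longrightarrow> valid_circuit L d (sweep L d p dir)"
  by (auto simp: valid_circuit_def sweep_def intro: valid_sweep_layer)

lemma gate_count_sweep: "gate_count (sweep L d p dir) \<le> L ^ d"
proof -
  have "gate_count (sweep L d p dir)
      = (\<Sum>k\<leftarrow>[1..<L]. length (filter (\<lambda>v. v ! p = orient dir L k) (site_list L d)))"
    by (simp add: gate_count_def sweep_def sweep_layer_def o_def)
  also have "\<dots> \<le> length (site_list L d)"
    by (rule sum_filter_lengths) (auto simp: distinct_site_list orient_eq_iff)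
  finally show ?thesis by (simp add: length_site_list)
qed

lemma sweep_cnot_gates: "p < d \<Longrightarrow> \<forall>g\<in>set (concat (sweep L d p dir)). cnot_gate g"
proof -
  assume p: "p < d"
  show ?thesis
  proof
    fix g assume "g \<in> set (concat (sweep L d p dir))"
    then obtain k v where k: "1 \<le> k" "k < L" and v: "v \<in> sites L d" "v ! p = orient dir L k"
      and g: "g = CNOT (v[p := orient dir L (k - 1)]) v"
      by (auto simp: sweep_def sweep_layer_def set_site_list)
    have "orient dir L (k - 1) \<noteq> orient dir L k" using k by (simp add: orient_eq_iff)
    then have "v[p := orient dir L (k - 1)] \<noteq> v" using v p
      by (metis in_sites nth_list_update_eq)
    then show "cnot_gate g" using g by simp
  qed
qed

lemma valid_sweeps: "\<forall>a\<in>set axs. fst a < d \<Longrightarrow> valid_circuit L d (sweeps L d axs)"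
  by (auto simp: sweeps_def valid_circuit_def valid_sweep[unfolded valid_circuit_def])

lemma depth_sweeps: "depth (sweeps L d axs) = length axs * (L - 1)"
  by (induction axs) (auto simp: sweeps_def depth_def sweep_def)

lemma gate_count_sweeps: "gate_count (sweeps L d axs) \<le> length axs * L ^ d"
proof (induction axs)
  case Nil then show ?case by (simp add: sweeps_def gate_count_def)
next
  case (Cons a axs)
  obtain p dir where a: "a = (p, dir)" by (cases a)
  have "gate_count (sweeps L d (a # axs)) = gate_count (sweep L d p dir) + gate_count (sweeps L d axs)"
    by (simp add: sweeps_def a gate_count_append)
  then show ?case using Cons gate_count_sweep[of L d p dir] by simp
qed

lemma sweeps_cnot_gates: "\<forall>a\<in>set axs. fst a < d \<Longrightarrow> \<forall>g\<in>set (concat (sweeps L d axs)). cnot_gate g"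
  using sweep_cnot_gates by (fastforce simp: sweeps_def)

lemma implements_phase_concat:
  assumes "\<And>e. e \<in> set es \<Longrightarrow> implements_phase (F e) (\<Phi> e)"
  shows "implements_phase (concat (map F es)) (\<lambda>c. sum_list (map (\<lambda>e. \<Phi> e c) es))"
  using assms
proof (induction es)
  case Nil then show ?case using implements_phase_Nil by simp
next
  case (Cons e es)
  have "implements_phase (F e @ concat (map F es)) (\<lambda>c. \<Phi> e c + sum_list (map (\<lambda>e. \<Phi> e c) es))"
    using Cons by (intro implements_phase_append) auto
  then show ?case by simp
qed

section \<open>Phases of box-shaped quadratic forms\<close>

definition incr :: "nat \<Rightarrow> nat list \<Rightarrow> nat list" where "incr p w = w[p := w ! p + 1]"
definition decr :: "nat \<Rightarrow> nat list \<Rightarrow> nat list" where "decr p w = w[p := w ! p - 1]"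

lemma length_incr[simp]: "length (incr p w) = length w" by (simp add: incr_def)
lemma length_decr[simp]: "length (decr p w) = length w" by (simp add: decr_def)

lemma nth_incr: "p < length w \<Longrightarrow> incr p w ! q = (if q = p then w ! p + 1 else w ! q)"
  by (simp add: incr_def nth_list_update)

lemma nth_decr: "p < length w \<Longrightarrow> decr p w ! q = (if q = p then w ! p - 1 else w ! q)"
  by (simp add: decr_def nth_list_update)

lemma decr_incr: "decr p (incr p w) = w"
  by (cases "p < length w") (simp_all add: incr_def decr_def list_update_beyond)

lemma incr_decr: "1 \<le> w ! p \<Longrightarrow> incr p (decr p w) = w"
  by (cases "p < length w") (simp_all add: incr_def decr_def list_update_beyond)

lemma decr_incr_commute: "a \<noteq> b \<Longrightarrow> decr b (incr a w) = incr a (decr b w)"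
  by (simp add: incr_def decr_def list_update_swap)

lemma incr_sites: "w \<in> sites L d \<Longrightarrow> w ! p + 1 < L \<Longrightarrow> incr p w \<in> sites L d"
  by (simp add: incr_def sites_upd)

lemma decr_sites:
  assumes "w \<in> sites L d" "p < d" shows "decr p w \<in> sites L d"
proof -
  have "w ! p < L" using assms by (simp add: in_sites)
  then show ?thesis using assms(1) by (simp add: decr_def sites_upd less_imp_diff_less)
qed

lemma l1dist_commute: "length u = length v \<Longrightarrow> l1dist u v = l1dist v u"
  by (simp add: l1dist_def abs_minus_commute)

lemma l1dist_incr: "p < length w \<Longrightarrow> l1dist w (incr p w) = 1"
  using l1dist_one[of w "incr p w" p] by (simp add: nth_incr)

lemma l1dist_decr: "p < length w \<Longrightarrow> 1 \<le> w ! p \<Longrightarrow> l1dist w (decr p w) = 1"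
  using l1dist_one[of w "decr p w" p] by (simp add: nth_decr)

lemma parity_ne_Suc: "(m::nat) mod 2 = n mod 2 \<Longrightarrow> m \<noteq> Suc n"
  by presburger

lemma parity_ne_pred: "(m::nat) mod 2 = n mod 2 \<Longrightarrow> 1 \<le> n \<Longrightarrow> m \<noteq> n - 1"
  by presburger

definition parity :: "config \<Rightarrow> nat list set \<Rightarrow> bit" where
  "parity c A = (\<Sum>u\<in>A. cbit c u)"

lemma parity_empty[simp]: "parity c {} = 0"
  by (simp add: parity_def)

lemma parity_union_disjoint:
  "finite A \<Longrightarrow> finite B \<Longrightarrow> A \<inter> B = {} \<Longrightarrow> parity c (A \<union> B) = parity c A + parity c B"
  unfolding parity_def by (rule sum.union_disjoint)

lemma parity_union:
  "finite A \<Longrightarrow> finite B \<Longrightarrow> parity c (A \<union> B) = parity c A + parity c B + parity c (A \<inter> B)"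
  using sum.union_inter[of A B "cbit c"] unfolding parity_def
  by (simp add: bit_eq_add_iff add.assoc del: sum_of_bool_eq)

lemma qform_of_bool:
  assumes "finite Q"
  shows "qform Q (\<lambda>w u. of_bool (P w u)) c = (\<Sum>w\<in>Q. parity c {u\<in>Q. P w u} * cbit c w)"
  unfolding qform_def parity_def
proof (intro sum.cong refl)
  fix w
  have "(\<Sum>u\<in>{u\<in>Q. P w u}. cbit c u) = (\<Sum>u\<in>Q. of_bool (P w u) * cbit c u)"
    using assms by (simp add: Int_def conj_ac)
  then show "(\<Sum>u\<in>Q. of_bool (P w u) * cbit c w * cbit c u) = (\<Sum>u\<in>{u\<in>Q. P w u}. cbit c u) * cbit c w"
    by (simp add: sum_distrib_right mult_ac del: sum_of_bool_mult_eq)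
qed

text \<open>The sites with all coordinates in \<open>Y\<close> equal to zero index the slabs: the classes of sites that
  agree outside \<open>Y\<close>.\<close>

definition floor_sites :: "nat \<Rightarrow> nat \<Rightarrow> nat list \<Rightarrow> nat list set" where
  "floor_sites L d Y = {w\<in>sites L d. \<forall>y\<in>set Y. w ! y = 0}"

definition floor_proj :: "nat list \<Rightarrow> nat list \<Rightarrow> nat list" where
  "floor_proj Y w = map (\<lambda>q. if q \<in> set Y then 0 else w ! q) [0..<length w]"

definition slab :: "nat \<Rightarrow> nat \<Rightarrow> nat list \<Rightarrow> nat list \<Rightarrow> nat list set" where
  "slab L d Y r = {u\<in>sites L d. \<forall>q<d. q \<notin> set Y \<longrightarrow> u ! q = r ! q}"

lemma floor_proj_floor_sites: "w \<in> sites L d \<Longrightarrow> \<forall>y\<in>set Y. y < d \<Longrightarrow> floor_proj Y w \<in> floor_sites L d Y"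
  by (auto simp: floor_sites_def floor_proj_def in_sites)

lemma floor_proj_eq_iff:
  assumes "w \<in> sites L d" "r \<in> floor_sites L d Y" "\<forall>y\<in>set Y. y < d"
  shows "floor_proj Y w = r \<longleftrightarrow> w \<in> slab L d Y r"
  using assms unfolding slab_def floor_sites_def in_sites
  by (auto simp: floor_proj_def intro!: nth_equalityI)

lemma sum_sites_by_slabs:
  assumes Yd: "\<forall>y\<in>set Y. y < d"
    and F: "\<And>w r. r \<in> floor_sites L d Y \<Longrightarrow> w \<in> slab L d Y r \<Longrightarrow> F w = F r"
  shows "(\<Sum>w\<in>sites L d. F w * cbit c w) = (\<Sum>r\<in>floor_sites L d Y. F r * parity c (slab L d Y r))"
proof -
  have "(\<Sum>w\<in>sites L d. F w * cbit c w)
      = (\<Sum>r\<in>floor_sites L d Y. \<Sum>w\<in>{w\<in>sites L d. floor_proj Y w = r}. F w * cbit c w)"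
    by (rule sum.group[symmetric]) (use Yd floor_proj_floor_sites in \<open>auto simp: floor_sites_def\<close>)
  also have "\<dots> = (\<Sum>r\<in>floor_sites L d Y. \<Sum>w\<in>slab L d Y r. F r * cbit c w)"
  proof (intro sum.cong refl)
    fix r assume r: "r \<in> floor_sites L d Y"
    then show "{w\<in>sites L d. floor_proj Y w = r} = slab L d Y r"
      using floor_proj_eq_iff[OF _ r Yd] by (auto simp: slab_def)
    show "F w * cbit c w = F r * cbit c w" if "w \<in> slab L d Y r" for w
      using F[OF r that] by simp
  qed
  finally show ?thesis by (simp add: sum_distrib_left parity_def)
qed

definition lower_axes :: "nat list \<Rightarrow> nat \<Rightarrow> (nat \<times> bool) list" where
  "lower_axes Y p = map (\<lambda>y. (y, False)) Y @ [(p, True)]"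

definition cross_axes :: "nat list \<Rightarrow> nat \<Rightarrow> nat \<Rightarrow> (nat \<times> bool) list" where
  "cross_axes Y a b = map (\<lambda>y. (y, False)) Y @ [(a, False), (b, True)]"

lemma map_of_falses: "map_of (map (\<lambda>y. (y, False)) Y) q = (if q \<in> set Y then Some False else None)"
  by (induction Y) auto

lemma sweep_rel_lower_axes:
  "p \<notin> set Y \<Longrightarrow> sweep_rel (lower_axes Y p) q s t = (if q \<in> set Y then t \<le> s else if q = p then s \<le> t else s = t)"
  by (auto simp: sweep_rel_def lower_axes_def map_add_def map_of_falses dir_le_def split: option.splits)

lemma sweep_rel_cross_axes:
  "a \<notin> set Y \<Longrightarrow> b \<notin> set Y \<Longrightarrow> a \<noteq> b \<Longrightarrow> sweep_rel (cross_axes Y a b) q s t =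
     (if q \<in> set Y \<or> q = a then t \<le> s else if q = b then s \<le> t else s = t)"
  by (auto simp: sweep_rel_def cross_axes_def map_add_def map_of_falses dir_le_def split: option.splits)

definition lower_box :: "nat \<Rightarrow> nat list \<Rightarrow> nat \<Rightarrow> nat list \<Rightarrow> nat list \<Rightarrow> bool" where
  "lower_box d Y p w u = ((\<forall>q<d. q \<notin> set Y \<longrightarrow> q \<noteq> p \<longrightarrow> u ! q = w ! q) \<and> u ! p < w ! p)"

definition lower_anchors :: "nat \<Rightarrow> nat \<Rightarrow> nat list \<Rightarrow> nat \<Rightarrow> (nat list \<Rightarrow> bool) \<Rightarrow> nat \<Rightarrow> nat list list" where
  "lower_anchors L d Y p sel e =
     filter (\<lambda>w. (\<forall>y\<in>set Y. w ! y = 0) \<and> sel w \<and> 1 \<le> w ! p \<and> w ! p mod 2 = e) (site_list L d)"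

definition lower_core_class :: "nat \<Rightarrow> nat \<Rightarrow> nat list \<Rightarrow> nat \<Rightarrow> (nat list \<Rightarrow> bool) \<Rightarrow> nat \<Rightarrow> circuit" where
  "lower_core_class L d Y p sel e = (let W = lower_anchors L d Y p sel e in
     [map (\<lambda>w. CZ w (decr p w)) W, map (\<lambda>w. G1 (decr p w) Zmat) W])"

definition lower_core :: "nat \<Rightarrow> nat \<Rightarrow> nat list \<Rightarrow> nat \<Rightarrow> (nat list \<Rightarrow> bool) \<Rightarrow> circuit" where
  "lower_core L d Y p sel = lower_core_class L d Y p sel 0 @ lower_core_class L d Y p sel 1"

definition lower_box_circuit :: "nat \<Rightarrow> nat \<Rightarrow> nat list \<Rightarrow> nat \<Rightarrow> (nat list \<Rightarrow> bool) \<Rightarrow> circuit" where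
  "lower_box_circuit L d Y p sel =
     sweeps L d (lower_axes Y p) @ lower_core L d Y p sel @ rev_circuit (sweeps L d (lower_axes Y p))"

locale lower_box_setting =
  fixes L d :: nat and Y :: "nat list" and p :: nat and sel :: "nat list \<Rightarrow> bool"
  assumes Yd: "\<forall>y\<in>set Y. y < d" and distY: "distinct Y" and pd: "p < d" and pY: "p \<notin> set Y"
    and sel_slab: "\<And>w r. r \<in> floor_sites L d Y \<Longrightarrow> w \<in> slab L d Y r \<Longrightarrow> sel w = sel r"
begin

lemma lower_axes_ok: "distinct (map fst (lower_axes Y p))" "\<forall>a\<in>set (lower_axes Y p). fst a < d"
  using distY pY Yd pd by (auto simp: lower_axes_def o_def)

lemma lower_anchors_iff: "w \<in> set (lower_anchors L d Y p sel e) \<longleftrightarrow>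
   w \<in> floor_sites L d Y \<and> sel w \<and> 1 \<le> w ! p \<and> w ! p mod 2 = e"
  by (auto simp: lower_anchors_def set_site_list floor_sites_def)

lemma valid_lower_core_class: "valid_circuit L d (lower_core_class L d Y p sel e)"
proof -
  define W where "W = lower_anchors L d Y p sel e"
  have W: "w \<in> sites L d" "length w = d" "1 \<le> w ! p" "w ! p mod 2 = e" if "w \<in> set W" for w
    using that by (auto simp: W_def lower_anchors_iff floor_sites_def in_sites)
  have dW: "distinct W" using distinct_site_list by (simp add: W_def lower_anchors_def)
  have "inj_on (decr p) (set W)" by (rule inj_on_inverseI[where g = "incr p"], rule incr_decr, erule W(3))
  then have dd: "distinct (map (decr p) W)" using dW by (simp add: distinct_map)
  have "x \<noteq> decr p y" if "x \<in> set W" "y \<in> set W" for x y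
  proof
    assume "x = decr p y"
    then have "x ! p = y ! p - 1" using W(2)[OF that(2)] pd by (simp add: nth_decr)
    then show False using parity_ne_pred W(3,4) that by metis
  qed
  then have disj: "(\<lambda>w. w) ` set W \<inter> decr p ` set W = {}" by blast
  have "valid_layer L d (map (\<lambda>w. CZ w (decr p w)) W)"
    using W dW dd disj pd by (intro valid_layer_pairs) (auto simp: decr_sites l1dist_decr)
  moreover have "valid_layer L d (map (\<lambda>w. G1 (decr p w) Zmat) W)"
    using W dd pd by (intro valid_layer_Z) (auto simp: decr_sites)
  ultimately show ?thesis by (simp add: lower_core_class_def valid_circuit_def W_def Let_def)
qed

lemma lower_core_class_phase: "implements_phase (concat (lower_core_class L d Y p sel e))
   (\<lambda>c. \<Sum>w\<in>set (lower_anchors L d Y p sel e). cbit c w * cbit c (decr p w) + cbit c (decr p w))"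
proof -
  have "distinct (lower_anchors L d Y p sel e)"
    using distinct_site_list by (simp add: lower_anchors_def)
  then show ?thesis
    using implements_phase_append[OF implements_phase_CZ_layer implements_phase_Z_layer]
    by (simp add: lower_core_class_def Let_def sum.distrib)
qed

lemma lower_core_phase: "implements_phase (concat (lower_core L d Y p sel))
   (\<lambda>c. \<Sum>w\<in>{w\<in>floor_sites L d Y. sel w \<and> 1 \<le> w ! p}. cbit c w * cbit c (decr p w) + cbit c (decr p w))"
proof -
  have "set (lower_anchors L d Y p sel 0) \<union> set (lower_anchors L d Y p sel 1)
      = {w\<in>floor_sites L d Y. sel w \<and> 1 \<le> w ! p}"
    and "set (lower_anchors L d Y p sel 0) \<inter> set (lower_anchors L d Y p sel 1) = {}"
    by (auto simp: lower_anchors_iff)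
  then show ?thesis
    using implements_phase_append[OF lower_core_class_phase lower_core_class_phase, of 0 1]
    by (simp add: lower_core_def sum.union_disjoint[symmetric])
qed

lemma sweep_region_lower_iff:
  "v \<in> floor_sites L d Y \<Longrightarrow> u \<in> sweep_region L d (lower_axes Y p) v \<longleftrightarrow>
     u \<in> sites L d \<and> (\<forall>q<d. q \<notin> set Y \<longrightarrow> q \<noteq> p \<longrightarrow> u ! q = v ! q) \<and> u ! p \<le> v ! p"
  using pd pY by (auto simp: sweep_region_def sweep_rel_lower_axes floor_sites_def)

lemma slab_lower_iff:
  "u \<in> slab L d Y r \<longleftrightarrow> u \<in> sites L d \<and> (\<forall>q<d. q \<notin> set Y \<longrightarrow> q \<noteq> p \<longrightarrow> u ! q = r ! q) \<and> u ! p = r ! p"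
  using pd pY by (auto simp: slab_def)

lemma cnot_run_lower_sweeps:
  "v \<in> floor_sites L d Y \<Longrightarrow>
     cbit (cnot_run (concat (sweeps L d (lower_axes Y p))) c) v = parity c (sweep_region L d (lower_axes Y p) v)"
  using cnot_run_sweeps[OF lower_axes_ok] by (simp add: parity_def floor_sites_def)

lemma parity_sweep_region_lower:
  assumes r: "r \<in> floor_sites L d Y"
  shows "parity c (sweep_region L d (lower_axes Y p) r)
    = parity c (slab L d Y r) + parity c {u\<in>sites L d. lower_box d Y p r u}"
proof -
  have "sweep_region L d (lower_axes Y p) r = slab L d Y r \<union> {u\<in>sites L d. lower_box d Y p r u}"
    "slab L d Y r \<inter> {u\<in>sites L d. lower_box d Y p r u} = {}"
    by (auto simp: sweep_region_lower_iff[OF r] slab_lower_iff lower_box_def)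
  then show ?thesis by (simp add: parity_union_disjoint slab_def)
qed

lemma lower_box_sweep_region:
  assumes r: "r \<in> floor_sites L d Y" and rp: "1 \<le> r ! p"
  shows "decr p r \<in> floor_sites L d Y"
    and "{u\<in>sites L d. lower_box d Y p r u} = sweep_region L d (lower_axes Y p) (decr p r)"
proof -
  have lr: "length r = d" using r by (simp add: floor_sites_def in_sites)
  show dr: "decr p r \<in> floor_sites L d Y"
    using r lr pd pY by (auto simp: floor_sites_def decr_sites nth_decr)
  show "{u\<in>sites L d. lower_box d Y p r u} = sweep_region L d (lower_axes Y p) (decr p r)"
    using pd rp by (auto simp: sweep_region_lower_iff[OF dr] lower_box_def nth_decr lr)
qed

lemma lower_core_phase_eq_qform:
  defines "G \<equiv> \<lambda>c v. cbit (cnot_run (concat (sweeps L d (lower_axes Y p))) c) v"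
  shows "(\<Sum>w\<in>{w\<in>floor_sites L d Y. sel w \<and> 1 \<le> w ! p}. G c w * G c (decr p w) + G c (decr p w))
     = qform (sites L d) (\<lambda>w u. of_bool (sel w \<and> lower_box d Y p w u)) c"
proof -
  define B where "B v = {u\<in>sites L d. lower_box d Y p v u}" for v
  have B: "parity c (B r) = (if 1 \<le> r ! p then G c (decr p r) else 0)" if r: "r \<in> floor_sites L d Y" for r
  proof (cases "1 \<le> r ! p")
    case True
    then show ?thesis using lower_box_sweep_region[OF r True] cnot_run_lower_sweeps by (simp add: G_def B_def)
  next
    case False
    then have "B r = {}" by (auto simp: B_def lower_box_def)
    then show ?thesis using False by simp
  qed
  have slab: "parity c (slab L d Y r) = G c r + parity c (B r)" if r: "r \<in> floor_sites L d Y" for r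
    using parity_sweep_region_lower[OF r] cnot_run_lower_sweeps[OF r]
    by (simp add: G_def B_def bit_eq_add_iff)
  have "qform (sites L d) (\<lambda>w u. of_bool (sel w \<and> lower_box d Y p w u)) c
      = (\<Sum>w\<in>sites L d. (of_bool (sel w) * parity c (B w)) * cbit c w)"
    unfolding qform_of_bool[OF finite_sites]
    by (intro sum.cong refl) (simp add: parity_def B_def)
  also have "\<dots> = (\<Sum>r\<in>floor_sites L d Y. (of_bool (sel r) * parity c (B r)) * parity c (slab L d Y r))"
  proof (rule sum_sites_by_slabs[OF Yd])
    fix w r assume r: "r \<in> floor_sites L d Y" and w: "w \<in> slab L d Y r"
    then have "\<forall>q<d. q \<notin> set Y \<longrightarrow> w ! q = r ! q" by (simp add: slab_def)
    then have "B w = B r" using pd pY by (simp add: B_def lower_box_def)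
    then show "of_bool (sel w) * parity c (B w) = of_bool (sel r) * parity c (B r)"
      using sel_slab[OF r w] by simp
  qed
  also have "\<dots> = (\<Sum>r\<in>floor_sites L d Y. of_bool (sel r \<and> 1 \<le> r ! p) * (G c r * G c (decr p r) + G c (decr p r)))"
    by (intro sum.cong refl) (simp add: slab B distrib_left mult.commute bit_mult_self)
  also have "\<dots> = (\<Sum>w\<in>{w\<in>floor_sites L d Y. sel w \<and> 1 \<le> w ! p}. G c w * G c (decr p w) + G c (decr p w))"
    by (simp add: Int_def floor_sites_def)
  finally show ?thesis ..
qed

lemma depth_lower_core: "depth (lower_core L d Y p sel) = 4"
  by (simp add: lower_core_def lower_core_class_def depth_def Let_def)

lemma gate_count_lower_core_class: "gate_count (lower_core_class L d Y p sel e) \<le> 2 * L ^ d"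
proof -
  have "length (lower_anchors L d Y p sel e) \<le> L ^ d"
    unfolding lower_anchors_def by (rule order.trans[OF length_filter_le]) (simp add: length_site_list)
  then show ?thesis by (simp add: lower_core_class_def gate_count_def Let_def)
qed

lemma valid_lower_box_circuit: "valid_circuit L d (lower_box_circuit L d Y p sel)"
  using valid_sweeps[OF lower_axes_ok(2)] valid_circuit_rev_circuit[OF valid_sweeps[OF lower_axes_ok(2)]]
    valid_lower_core_class
  by (simp add: lower_box_circuit_def valid_circuit_append lower_core_def)

lemma depth_lower_box_circuit:
  "depth (lower_box_circuit L d Y p sel) = 2 * (Suc (length Y) * (L - 1)) + 4"
  by (simp only: lower_box_circuit_def depth_append depth_rev_circuit depth_sweeps depth_lower_core)
    (simp add: lower_axes_def)

lemma gate_count_lower_box_circuit: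
  "gate_count (lower_box_circuit L d Y p sel) \<le> (2 * Suc (length Y) + 4) * L ^ d"
proof -
  have "gate_count (sweeps L d (lower_axes Y p)) \<le> Suc (length Y) * L ^ d"
    using gate_count_sweeps[of L d "lower_axes Y p"] by (simp add: lower_axes_def)
  then show ?thesis
    using gate_count_lower_core_class[of 0] gate_count_lower_core_class[of 1]
    by (simp add: lower_box_circuit_def gate_count_append gate_count_rev_circuit lower_core_def algebra_simps)
qed

lemma lower_box_circuit_phase: "implements_phase (concat (lower_box_circuit L d Y p sel))
   (qform (sites L d) (\<lambda>w u. of_bool (sel w \<and> lower_box d Y p w u)))"
  using implements_phase_conjugate[OF sweeps_cnot_gates[OF lower_axes_ok(2), of L] lower_core_phase]
  unfolding lower_core_phase_eq_qform lower_box_circuit_def concat_append concat_rev_circuit .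

end

definition cross_box :: "nat \<Rightarrow> nat list \<Rightarrow> nat \<Rightarrow> nat \<Rightarrow> nat list \<Rightarrow> nat list \<Rightarrow> bool" where
  "cross_box d Y a b w u =
     ((\<forall>q<d. q \<notin> set Y \<longrightarrow> q \<noteq> a \<longrightarrow> q \<noteq> b \<longrightarrow> u ! q = w ! q) \<and> w ! a < u ! a \<and> u ! b < w ! b)"

definition corner :: "nat \<Rightarrow> nat \<Rightarrow> nat list \<Rightarrow> nat list" where "corner a b w = decr b (incr a w)"

lemma length_corner[simp]: "length (corner a b w) = length w" by (simp add: corner_def)

definition cross_anchors :: "nat \<Rightarrow> nat \<Rightarrow> nat list \<Rightarrow> nat \<Rightarrow> nat \<Rightarrow> nat \<times> nat \<Rightarrow> nat list list" where
  "cross_anchors L d Y a b e = filter (\<lambda>w. (\<forall>y\<in>set Y. w ! y = 0) \<and> w ! a + 1 < L \<and> 1 \<le> w ! b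
      \<and> (w ! a mod 2, w ! b mod 2) = e) (site_list L d)"

text \<open>With \<open>x = incr a w\<close>, \<open>y = decr b w\<close> and \<open>z = corner a b w\<close>, one parity class contributes the
  phase \<open>(w + x + y + z) z\<close>; the term \<open>(w + x) z\<close> needs a CNOT from \<open>w\<close> onto \<open>x\<close> because \<open>w\<close> and
  \<open>z\<close> are not neighbours.\<close>

definition cross_core_class :: "nat \<Rightarrow> nat \<Rightarrow> nat list \<Rightarrow> nat \<Rightarrow> nat \<Rightarrow> nat \<times> nat \<Rightarrow> circuit" where
  "cross_core_class L d Y a b e = (let W = cross_anchors L d Y a b e in
     [map (\<lambda>w. CNOT w (incr a w)) W, map (\<lambda>w. CZ (corner a b w) (incr a w)) W,
      rev (map (\<lambda>w. CNOT w (incr a w)) W), map (\<lambda>w. CZ (decr b w) (corner a b w)) W,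
      map (\<lambda>w. G1 (corner a b w) Zmat) W])"

definition parity_classes :: "(nat \<times> nat) list" where "parity_classes = [(0,0), (0,1), (1,0), (1,1)]"

definition cross_core :: "nat \<Rightarrow> nat \<Rightarrow> nat list \<Rightarrow> nat \<Rightarrow> nat \<Rightarrow> circuit" where
  "cross_core L d Y a b = concat (map (cross_core_class L d Y a b) parity_classes)"

definition cross_box_circuit :: "nat \<Rightarrow> nat \<Rightarrow> nat list \<Rightarrow> nat \<Rightarrow> nat \<Rightarrow> circuit" where
  "cross_box_circuit L d Y a b =
     sweeps L d (cross_axes Y a b) @ cross_core L d Y a b @ rev_circuit (sweeps L d (cross_axes Y a b))"

locale cross_box_setting =
  fixes L d :: nat and Y :: "nat list" and a b :: nat
  assumes Yd: "\<forall>y\<in>set Y. y < d" and distY: "distinct Y" and ad: "a < d" and bd: "b < d"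
    and aY: "a \<notin> set Y" and bY: "b \<notin> set Y" and ab: "a \<noteq> b"
begin

lemma cross_axes_ok: "distinct (map fst (cross_axes Y a b))" "\<forall>x\<in>set (cross_axes Y a b). fst x < d"
  using distY aY bY ab Yd ad bd by (auto simp: cross_axes_def o_def)

lemma cross_anchors_iff: "w \<in> set (cross_anchors L d Y a b e) \<longleftrightarrow>
   w \<in> floor_sites L d Y \<and> w ! a + 1 < L \<and> 1 \<le> w ! b \<and> (w ! a mod 2, w ! b mod 2) = e"
  by (auto simp: cross_anchors_def set_site_list floor_sites_def)

lemma corner_eq: "corner a b w = incr a (decr b w)"
  by (simp add: corner_def decr_incr_commute ab)

lemma nth_corner:
  "length w = d \<Longrightarrow> corner a b w ! q = (if q = b then w ! b - 1 else if q = a then w ! a + 1 else w ! q)"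
  using ad bd ab by (simp add: corner_def nth_incr nth_decr)

lemma corner_sites: "w \<in> sites L d \<Longrightarrow> w ! a + 1 < L \<Longrightarrow> corner a b w \<in> sites L d"
  by (simp add: corner_def decr_sites incr_sites bd)

lemma cross_anchors_inj:
  assumes "W = cross_anchors L d Y a b e"
  shows "distinct W" "distinct (map (incr a) W)" "distinct (map (decr b) W)" "distinct (map (corner a b) W)"
proof -
  have W: "length w = d" "1 \<le> w ! b" if "w \<in> set W" for w
    using that assms by (auto simp: cross_anchors_iff floor_sites_def in_sites)
  show dW: "distinct W" using distinct_site_list by (simp add: assms cross_anchors_def)
  have "inj_on (incr a) (set W)" by (rule inj_on_inverseI[where g = "decr a"]) (simp add: decr_incr)
  moreover have "inj_on (decr b) (set W)" by (rule inj_on_inverseI[where g = "incr b"], rule incr_decr, erule W(2))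
  moreover have "inj_on (corner a b) (set W)"
  proof (rule inj_on_inverseI[where g = "\<lambda>v. decr a (incr b v)"])
    fix x assume x: "x \<in> set W"
    have "1 \<le> incr a x ! b" using W[OF x] ad ab by (simp add: nth_incr)
    then show "decr a (incr b (corner a b x)) = x" by (simp add: corner_def incr_decr decr_incr)
  qed
  ultimately show "distinct (map (incr a) W)" "distinct (map (decr b) W)" "distinct (map (corner a b) W)"
    using dW by (simp_all add: distinct_map)
qed

lemma cross_anchors_separated:
  assumes x: "x \<in> set (cross_anchors L d Y a b e)" and y: "y \<in> set (cross_anchors L d Y a b e)"
  shows "x \<noteq> incr a y" "corner a b x \<noteq> incr a y" "decr b x \<noteq> corner a b y"
proof -
  have W: "length w = d" "1 \<le> w ! b" "w ! a mod 2 = fst e" "w ! b mod 2 = snd e"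
    if "w \<in> set (cross_anchors L d Y a b e)" for w
    using that by (auto simp: cross_anchors_iff floor_sites_def in_sites)
  have a_ne: "x ! a \<noteq> Suc (y ! a)"
    using parity_ne_Suc[of "x ! a" "y ! a"] W(3)[OF x] W(3)[OF y] by simp
  have b_ne: "x ! b - 1 \<noteq> y ! b"
    using parity_ne_pred[of "y ! b" "x ! b"] W(4)[OF x] W(4)[OF y] W(2)[OF x] by simp
  show "x \<noteq> incr a y"
  proof
    assume "x = incr a y"
    then have "x ! a = Suc (y ! a)" using W(1)[OF y] ad by (simp add: nth_incr)
    with a_ne show False ..
  qed
  show "corner a b x \<noteq> incr a y"
  proof
    assume "corner a b x = incr a y"
    then have "corner a b x ! b = incr a y ! b" by simp
    then have "x ! b - 1 = y ! b" using W(1)[OF x] W(1)[OF y] ad ab by (simp add: nth_incr nth_corner)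
    with b_ne show False ..
  qed
  show "decr b x \<noteq> corner a b y"
  proof
    assume "decr b x = corner a b y"
    then have "decr b x ! a = corner a b y ! a" by simp
    then have "x ! a = Suc (y ! a)" using W(1)[OF x] W(1)[OF y] bd ab by (simp add: nth_decr nth_corner)
    with a_ne show False ..
  qed
qed

lemma valid_cross_core_class: "valid_circuit L d (cross_core_class L d Y a b e)"
proof -
  define W where "W = cross_anchors L d Y a b e"
  have W: "w \<in> sites L d" "length w = d" "w ! a + 1 < L" "1 \<le> w ! b" if "w \<in> set W" for w
    using that by (auto simp: W_def cross_anchors_iff floor_sites_def in_sites)
  note dist = cross_anchors_inj[OF W_def]
  have disj: "(\<lambda>w. w) ` set W \<inter> incr a ` set W = {}" "corner a b ` set W \<inter> incr a ` set W = {}"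
    "decr b ` set W \<inter> corner a b ` set W = {}"
    using cross_anchors_separated unfolding W_def by blast+
  have l1: "l1dist w (incr a w) = 1" "l1dist (corner a b w) (incr a w) = 1" "l1dist (decr b w) (corner a b w) = 1"
    if "w \<in> set W" for w
  proof -
    have w: "length w = d" "1 \<le> incr a w ! b" using W(2,4)[OF that] ad ab by (simp_all add: nth_incr)
    show "l1dist w (incr a w) = 1" using w ad by (simp add: l1dist_incr)
    show "l1dist (corner a b w) (incr a w) = 1"
      using w bd l1dist_decr[of b "incr a w"] by (simp add: corner_def l1dist_commute)
    show "l1dist (decr b w) (corner a b w) = 1"
      using w ad by (simp add: corner_eq l1dist_incr)
  qed
  have cnots: "valid_layer L d (map (\<lambda>w. CNOT w (incr a w)) W)"
    using W l1 dist disj by (intro valid_layer_pairs) (auto simp: incr_sites)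
  have "valid_layer L d (map (\<lambda>w. CZ (corner a b w) (incr a w)) W)"
    using W l1 dist disj by (intro valid_layer_pairs) (auto simp: incr_sites corner_sites)
  moreover have "valid_layer L d (map (\<lambda>w. CZ (decr b w) (corner a b w)) W)"
    using W l1 dist disj bd by (intro valid_layer_pairs) (auto simp: decr_sites corner_sites)
  moreover have "valid_layer L d (map (\<lambda>w. G1 (corner a b w) Zmat) W)"
    using W dist by (intro valid_layer_Z) (auto simp: corner_sites)
  ultimately show ?thesis
    using cnots valid_layer_rev[OF cnots] by (simp add: cross_core_class_def valid_circuit_def W_def Let_def)
qed

lemma cross_core_class_phase: "implements_phase (concat (cross_core_class L d Y a b e))
   (\<lambda>c. \<Sum>w\<in>set (cross_anchors L d Y a b e).
      (cbit c w + cbit c (incr a w) + cbit c (decr b w) + cbit c (corner a b w)) * cbit c (corner a b w))"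
proof -
  define W where "W = cross_anchors L d Y a b e"
  define A where "A = map (\<lambda>w. CNOT w (incr a w)) W"
  note dist = cross_anchors_inj[OF W_def]
  have ctl: "\<forall>w\<in>set W. w \<notin> incr a ` set W"
    using cross_anchors_separated(1) unfolding W_def by blast
  have A: "\<forall>g\<in>set A. cnot_gate g"
    using ctl by (auto simp: A_def)
  have run_A: "cbit (cnot_run A c) (corner a b w) * cbit (cnot_run A c) (incr a w)
      = cbit c (corner a b w) * (cbit c (incr a w) + cbit c w)" if "w \<in> set W" for c w
  proof -
    have "corner a b w \<notin> incr a ` set W"
      using cross_anchors_separated(2) that unfolding W_def by blast
    then show ?thesis
      using cnot_run_layer_other[OF dist(2) ctl] cnot_run_layer_target[OF dist(2) ctl that]
      by (simp add: A_def of_bool_neq)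
  qed
  have "implements_phase (concat (cross_core_class L d Y a b e))
      (\<lambda>c. (\<Sum>w\<in>set W. cbit (cnot_run A c) (corner a b w) * cbit (cnot_run A c) (incr a w))
        + ((\<Sum>w\<in>set W. cbit c (decr b w) * cbit c (corner a b w)) + (\<Sum>w\<in>set W. cbit c (corner a b w))))"
    using implements_phase_append[OF implements_phase_conjugate[OF A implements_phase_CZ_layer[OF dist(1)]]
        implements_phase_append[OF implements_phase_CZ_layer[OF dist(1)] implements_phase_Z_layer[OF dist(1)]]]
    by (simp add: cross_core_class_def Let_def A_def W_def)
  then show ?thesis
  proof (rule implements_phase_cong)
    fix c
    have summand: "cbit c (corner a b w) * (cbit c (incr a w) + cbit c w)
        + (cbit c (decr b w) * cbit c (corner a b w) + cbit c (corner a b w))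
        = (cbit c w + cbit c (incr a w) + cbit c (decr b w) + cbit c (corner a b w)) * cbit c (corner a b w)" for w
      by (simp add: algebra_simps bit_mult_self)
    have "(\<Sum>w\<in>set W. cbit (cnot_run A c) (corner a b w) * cbit (cnot_run A c) (incr a w))
        = (\<Sum>w\<in>set W. cbit c (corner a b w) * (cbit c (incr a w) + cbit c w))"
      by (rule sum.cong[OF refl run_A])
    then show "(\<Sum>w\<in>set W. cbit (cnot_run A c) (corner a b w) * cbit (cnot_run A c) (incr a w))
        + ((\<Sum>w\<in>set W. cbit c (decr b w) * cbit c (corner a b w)) + (\<Sum>w\<in>set W. cbit c (corner a b w)))
      = (\<Sum>w\<in>set (cross_anchors L d Y a b e).
          (cbit c w + cbit c (incr a w) + cbit c (decr b w) + cbit c (corner a b w)) * cbit c (corner a b w))"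
      by (simp only: sum.distrib[symmetric] summand W_def)
  qed
qed

definition anchor_sites :: "nat list set" where
  "anchor_sites = {w\<in>floor_sites L d Y. w ! a + 1 < L \<and> 1 \<le> w ! b}"

lemma cross_core_phase: "implements_phase (concat (cross_core L d Y a b))
   (\<lambda>c. \<Sum>w\<in>anchor_sites.
      (cbit c w + cbit c (incr a w) + cbit c (decr b w) + cbit c (corner a b w)) * cbit c (corner a b w))"
proof -
  define f where
    "f c w = (cbit c w + cbit c (incr a w) + cbit c (decr b w) + cbit c (corner a b w)) * cbit c (corner a b w)"
    for c w
  have "implements_phase (concat (map (\<lambda>e. concat (cross_core_class L d Y a b e)) parity_classes))
     (\<lambda>c. sum_list (map (\<lambda>e. \<Sum>w\<in>set (cross_anchors L d Y a b e). f c w) parity_classes))"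
    by (rule implements_phase_concat) (unfold f_def, rule cross_core_class_phase)
  moreover have "(\<Sum>e\<leftarrow>parity_classes. \<Sum>w\<in>set (cross_anchors L d Y a b e). f c w) = (\<Sum>w\<in>anchor_sites. f c w)"
    for c
  proof -
    have "sum_list (map (\<lambda>e. \<Sum>w\<in>set (cross_anchors L d Y a b e). f c w) parity_classes)
        = (\<Sum>e\<in>set parity_classes. \<Sum>w\<in>{w\<in>anchor_sites. (w ! a mod 2, w ! b mod 2) = e}. f c w)"
    proof -
      have "set (cross_anchors L d Y a b e) = {w\<in>anchor_sites. (w ! a mod 2, w ! b mod 2) = e}" for e
        by (auto simp: cross_anchors_iff anchor_sites_def)
      then show ?thesis by (simp add: sum_list_distinct_conv_sum_set parity_classes_def)
    qed
    also have "\<dots> = (\<Sum>w\<in>anchor_sites. f c w)"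
      by (rule sum.group) (auto simp: anchor_sites_def floor_sites_def parity_classes_def)
    finally show ?thesis .
  qed
  ultimately show ?thesis by (simp add: cross_core_def f_def parity_classes_def)
qed

lemma sweep_region_cross_iff:
  "v \<in> floor_sites L d Y \<Longrightarrow> u \<in> sweep_region L d (cross_axes Y a b) v \<longleftrightarrow> u \<in> sites L d
     \<and> (\<forall>q<d. q \<notin> set Y \<longrightarrow> q \<noteq> a \<longrightarrow> q \<noteq> b \<longrightarrow> u ! q = v ! q) \<and> v ! a \<le> u ! a \<and> u ! b \<le> v ! b"
  using ad bd aY bY ab by (auto simp: sweep_region_def sweep_rel_cross_axes floor_sites_def)

lemma slab_cross_iff:
  "u \<in> slab L d Y r \<longleftrightarrow> u \<in> sites L d
     \<and> (\<forall>q<d. q \<notin> set Y \<longrightarrow> q \<noteq> a \<longrightarrow> q \<noteq> b \<longrightarrow> u ! q = r ! q) \<and> u ! a = r ! a \<and> u ! b = r ! b"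
  using ad bd aY bY by (auto simp: slab_def)

lemma anchor_shifts:
  assumes "r \<in> anchor_sites"
  shows "incr a r \<in> floor_sites L d Y" "decr b r \<in> floor_sites L d Y" "corner a b r \<in> floor_sites L d Y"
  using assms aY bY ad bd
  by (auto simp: anchor_sites_def floor_sites_def incr_sites decr_sites corner_sites in_sites
      nth_incr nth_decr nth_corner)

lemma cnot_run_cross_sweeps:
  "v \<in> floor_sites L d Y \<Longrightarrow>
     cbit (cnot_run (concat (sweeps L d (cross_axes Y a b))) c) v = parity c (sweep_region L d (cross_axes Y a b) v)"
  using cnot_run_sweeps[OF cross_axes_ok] by (simp add: parity_def floor_sites_def)

text \<open>Inclusion-exclusion over GF(2): the quadrant of \<open>r\<close> is its slab plus the quadrants of the two
  neighbours \<open>incr a r\<close> and \<open>decr b r\<close>, which overlap in the quadrant of the corner.\<close>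

lemma parity_sweep_region_cross:
  assumes r: "r \<in> anchor_sites"
  defines "R \<equiv> sweep_region L d (cross_axes Y a b)"
  shows "parity c (R r) = parity c (slab L d Y r) + parity c (R (incr a r)) + parity c (R (decr b r))
      + parity c (R (corner a b r))"
    and "{u\<in>sites L d. cross_box d Y a b r u} = R (corner a b r)"
proof -
  have rf: "r \<in> floor_sites L d Y" and rs: "length r = d" "1 \<le> r ! b"
    using r by (auto simp: anchor_sites_def floor_sites_def in_sites)
  note iffs = sweep_region_cross_iff[OF rf] sweep_region_cross_iff[OF anchor_shifts(1)[OF r]]
    sweep_region_cross_iff[OF anchor_shifts(2)[OF r]] sweep_region_cross_iff[OF anchor_shifts(3)[OF r]]
    slab_cross_iff nth_incr nth_decr nth_corner rs(1) ad bd ab not_sym[OF ab]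
  have fin: "finite (R v)" for v by (simp add: R_def sweep_region_def)
  have "R r = slab L d Y r \<union> (R (incr a r) \<union> R (decr b r))" "slab L d Y r \<inter> (R (incr a r) \<union> R (decr b r)) = {}"
    "R (incr a r) \<inter> R (decr b r) = R (corner a b r)"
    unfolding R_def using rs(2) by (auto simp: iffs)
  then show "parity c (R r) = parity c (slab L d Y r) + parity c (R (incr a r)) + parity c (R (decr b r))
      + parity c (R (corner a b r))"
    by (simp add: parity_union_disjoint parity_union fin slab_def add.assoc)
  show "{u\<in>sites L d. cross_box d Y a b r u} = R (corner a b r)"
    unfolding R_def cross_box_def using rs(2) by (auto simp: iffs)
qed

lemma cross_box_empty:
  "r \<in> floor_sites L d Y \<Longrightarrow> r \<notin> anchor_sites \<Longrightarrow> {u\<in>sites L d. cross_box d Y a b r u} = {}"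
  using ad by (fastforce simp: cross_box_def anchor_sites_def in_sites)

lemma cross_core_phase_eq_qform:
  defines "G \<equiv> \<lambda>c v. cbit (cnot_run (concat (sweeps L d (cross_axes Y a b))) c) v"
  shows "(\<Sum>w\<in>anchor_sites. (G c w + G c (incr a w) + G c (decr b w) + G c (corner a b w)) * G c (corner a b w))
     = qform (sites L d) (\<lambda>w u. of_bool (cross_box d Y a b w u)) c"
proof -
  define B where "B v = {u\<in>sites L d. cross_box d Y a b v u}" for v
  have anchor: "parity c (B r) * parity c (slab L d Y r)
      = (G c r + G c (incr a r) + G c (decr b r) + G c (corner a b r)) * G c (corner a b r)"
    if r: "r \<in> anchor_sites" for r
    using parity_sweep_region_cross[OF r] cnot_run_cross_sweeps anchor_shifts[OF r] r
    by (simp add: G_def B_def anchor_sites_def bit_eq_add_iff add.assoc mult.commute)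
  have "qform (sites L d) (\<lambda>w u. of_bool (cross_box d Y a b w u)) c = (\<Sum>w\<in>sites L d. parity c (B w) * cbit c w)"
    unfolding qform_of_bool[OF finite_sites] B_def ..
  also have "\<dots> = (\<Sum>r\<in>floor_sites L d Y. parity c (B r) * parity c (slab L d Y r))"
  proof (rule sum_sites_by_slabs[OF Yd])
    fix w r assume "r \<in> floor_sites L d Y" "w \<in> slab L d Y r"
    then have "B w = B r" using ad bd aY bY by (auto simp: B_def cross_box_def slab_def)
    then show "parity c (B w) = parity c (B r)" by simp
  qed
  also have "\<dots> = (\<Sum>r\<in>anchor_sites. parity c (B r) * parity c (slab L d Y r))"
  proof (rule sum.mono_neutral_right)
    show "\<forall>r\<in>floor_sites L d Y - anchor_sites. parity c (B r) * parity c (slab L d Y r) = 0"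
    proof
      fix r assume "r \<in> floor_sites L d Y - anchor_sites"
      then have "B r = {}" unfolding B_def by (intro cross_box_empty) auto
      then show "parity c (B r) * parity c (slab L d Y r) = 0" by simp
    qed
  qed (auto simp: anchor_sites_def floor_sites_def)
  also have "\<dots> = (\<Sum>r\<in>anchor_sites.
      (G c r + G c (incr a r) + G c (decr b r) + G c (corner a b r)) * G c (corner a b r))"
    by (intro sum.cong refl) (rule anchor)
  finally show ?thesis ..
qed

lemma depth_cross_core: "depth (cross_core L d Y a b) = 20"
  by (simp add: cross_core_def parity_classes_def cross_core_class_def depth_def Let_def)

lemma gate_count_cross_core: "gate_count (cross_core L d Y a b) \<le> 20 * L ^ d"
proof -
  have len: "length (cross_anchors L d Y a b e) \<le> L ^ d" for e
    unfolding cross_anchors_def by (rule order.trans[OF length_filter_le]) (simp add: length_site_list)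
  have c: "sum_list (map length (cross_core_class L d Y a b e)) \<le> 5 * L ^ d" for e
    using len[of e] by (simp add: cross_core_class_def Let_def)
  show ?thesis
    using c[of "(0, 0)"] c[of "(0, 1)"] c[of "(1, 0)"] c[of "(1, 1)"]
    by (simp add: cross_core_def parity_classes_def gate_count_def)
qed

lemma valid_cross_box_circuit: "valid_circuit L d (cross_box_circuit L d Y a b)"
  using valid_sweeps[OF cross_axes_ok(2)] valid_circuit_rev_circuit[OF valid_sweeps[OF cross_axes_ok(2)]]
    valid_cross_core_class
  by (auto simp: cross_box_circuit_def valid_circuit_append cross_core_def valid_circuit_def)

lemma depth_cross_box_circuit:
  "depth (cross_box_circuit L d Y a b) = 2 * ((length Y + 2) * (L - 1)) + 20"
  by (simp only: cross_box_circuit_def depth_append depth_rev_circuit depth_sweeps depth_cross_core)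
    (simp add: cross_axes_def)

lemma gate_count_cross_box_circuit:
  "gate_count (cross_box_circuit L d Y a b) \<le> (2 * (length Y + 2) + 20) * L ^ d"
proof -
  have "gate_count (sweeps L d (cross_axes Y a b)) \<le> (length Y + 2) * L ^ d"
    using gate_count_sweeps[of L d "cross_axes Y a b"] by (simp add: cross_axes_def)
  then show ?thesis
    using gate_count_cross_core
    by (simp add: cross_box_circuit_def gate_count_append gate_count_rev_circuit algebra_simps)
qed

lemma cross_box_circuit_phase: "implements_phase (concat (cross_box_circuit L d Y a b))
   (qform (sites L d) (\<lambda>w u. of_bool (cross_box d Y a b w u)))"
  using implements_phase_conjugate[OF sweeps_cnot_gates[OF cross_axes_ok(2), of L] cross_core_phase]
  unfolding cross_core_phase_eq_qform cross_box_circuit_def concat_append concat_rev_circuit .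

end

section \<open>Snake and raster orderings\<close>

definition radix_value :: "nat \<Rightarrow> nat \<Rightarrow> (nat \<Rightarrow> nat) \<Rightarrow> nat" where
  "radix_value L d x = (\<Sum>i=1..d. L ^ (i - 1) * x i)"

lemma radix_value_Suc: "radix_value L (Suc m) x = radix_value L m x + L ^ m * x (Suc m)"
  by (simp add: radix_value_def)

lemma radix_value_cong: "(\<And>i. 1 \<le> i \<Longrightarrow> i \<le> d \<Longrightarrow> x i = y i) \<Longrightarrow> radix_value L d x = radix_value L d y"
  unfolding radix_value_def by (rule sum.cong) auto

lemma radix_value_less_power: "(\<forall>i. 1 \<le> i \<and> i \<le> m \<longrightarrow> x i < L) \<Longrightarrow> radix_value L m x < L ^ m"
proof (induction m)
  case 0 then show ?case by (simp add: radix_value_def)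
next
  case (Suc m)
  have h: "radix_value L m x < L ^ m" using Suc by auto
  have xs: "x (Suc m) < L" using Suc.prems by auto
  have "radix_value L (Suc m) x = radix_value L m x + L ^ m * x (Suc m)" by (rule radix_value_Suc)
  also have "\<dots> < L ^ m + L ^ m * x (Suc m)" using h by simp
  also have "\<dots> = L ^ m * Suc (x (Suc m))" by simp
  also have "\<dots> \<le> L ^ m * L" using xs by (intro mult_le_mono2) simp
  finally show ?case by (simp add: mult.commute)
qed

lemma radix_value_less:
  assumes "\<forall>i. 1 \<le> i \<and> i \<le> d \<longrightarrow> x i < L" "\<forall>i. 1 \<le> i \<and> i \<le> d \<longrightarrow> y i < L"
    and "1 \<le> l" "l \<le> d" "\<forall>k. l < k \<and> k \<le> d \<longrightarrow> x k = y k" "x l < y l"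
  shows "radix_value L d x < radix_value L d y"
  using assms
proof (induction d)
  case 0 then show ?case by simp
next
  case (Suc d)
  show ?case
  proof (cases "l = Suc d")
    case True
    have h: "radix_value L d x < L ^ d" using Suc.prems(1) by (intro radix_value_less_power) auto
    have "radix_value L (Suc d) x = radix_value L d x + L ^ d * x l" using True by (simp add: radix_value_Suc)
    also have "\<dots> < L ^ d + L ^ d * x l" using h by simp
    also have "\<dots> = L ^ d * Suc (x l)" by simp
    also have "\<dots> \<le> L ^ d * y l" using Suc.prems(6) by (intro mult_le_mono2) simp
    also have "\<dots> \<le> radix_value L (Suc d) y" using True by (simp add: radix_value_Suc)
    finally show ?thesis .
  next
    case False
    then have "radix_value L d x < radix_value L d y" using Suc.prems by (intro Suc.IH) auto
    moreover have "x (Suc d) = y (Suc d)" using Suc.prems(5) False Suc.prems(3,4) by auto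
    ultimately show ?thesis by (simp add: radix_value_Suc)
  qed
qed

lemma radix_value_less_iff:
  assumes "\<forall>i. 1 \<le> i \<and> i \<le> d \<longrightarrow> x i < L" "\<forall>i. 1 \<le> i \<and> i \<le> d \<longrightarrow> y i < L"
    and "1 \<le> l" "l \<le> d" "\<forall>k. l < k \<and> k \<le> d \<longrightarrow> x k = y k" "x l \<noteq> y l"
  shows "radix_value L d x < radix_value L d y \<longleftrightarrow> x l < y l"
proof
  assume k: "radix_value L d x < radix_value L d y"
  show "x l < y l"
  proof (rule ccontr)
    assume "\<not> x l < y l"
    then have "y l < x l" using assms(6) by simp
    then have "radix_value L d y < radix_value L d x" using assms by (intro radix_value_less[of d y L x l]) auto
    then show False using k by simp
  qed
next
  assume "x l < y l"
  then show "radix_value L d x < radix_value L d y" using assms by (intro radix_value_less) auto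
qed

lemma hierarchy_range: "hierarchy d \<tau> \<Longrightarrow> 1 \<le> k \<Longrightarrow> k \<le> d \<Longrightarrow> 1 \<le> \<tau> k \<and> \<tau> k \<le> d"
  unfolding hierarchy_def bij_betw_def by auto

lemma hierarchy_inj: "hierarchy d \<tau> \<Longrightarrow> 1 \<le> k \<Longrightarrow> k \<le> d \<Longrightarrow> 1 \<le> k' \<Longrightarrow> k' \<le> d \<Longrightarrow> \<tau> k = \<tau> k' \<Longrightarrow> k = k'"
proof -
  assume h: "hierarchy d \<tau>" and k: "1 \<le> k" "k \<le> d" "1 \<le> k'" "k' \<le> d" "\<tau> k = \<tau> k'"
  have i: "inj_on \<tau> {1..d}" using h by (simp add: hierarchy_def bij_betw_def)
  show "k = k'" by (rule inj_onD[OF i k(5)]) (use k in auto)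
qed

lemma hierarchy_surj: "hierarchy d \<tau> \<Longrightarrow> q < d \<Longrightarrow> \<exists>k. 1 \<le> k \<and> k \<le> d \<and> \<tau> k - 1 = q"
proof -
  assume h: "hierarchy d \<tau>" "q < d"
  then have "Suc q \<in> \<tau> ` {1..d}" unfolding hierarchy_def bij_betw_def by auto
  then obtain k where "k \<in> {1..d}" "Suc q = \<tau> k" by auto
  then show ?thesis by (intro exI[of _ k]) auto
qed

lemma hierarchy_axis_inj:
  "hierarchy d \<sigma> \<Longrightarrow> x \<in> {1..d} \<Longrightarrow> y \<in> {1..d} \<Longrightarrow> \<sigma> x - 1 = \<sigma> y - 1 \<Longrightarrow> x = y"
  using hierarchy_range hierarchy_inj by (metis One_nat_def Suc_pred atLeastAtMost_iff less_eq_Suc_le)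

lemma coord_lt: "v \<in> sites L d \<Longrightarrow> hierarchy d \<tau> \<Longrightarrow> 1 \<le> k \<Longrightarrow> k \<le> d \<Longrightarrow> coord v (\<tau> k) < L"
proof -
  assume a: "v \<in> sites L d" "hierarchy d \<tau>" "1 \<le> k" "k \<le> d"
  then have "1 \<le> \<tau> k" "\<tau> k \<le> d" using hierarchy_range by auto
  then show ?thesis using a(1) by (simp add: coord_def in_sites)
qed

lemma top_differing_level:
  assumes h: "hierarchy d \<tau>" and u: "u \<in> sites L d" and w: "w \<in> sites L d" and ne: "u \<noteq> w"
  shows "\<exists>l. 1 \<le> l \<and> l \<le> d \<and> coord u (\<tau> l) \<noteq> coord w (\<tau> l)
           \<and> (\<forall>k. l < k \<and> k \<le> d \<longrightarrow> coord u (\<tau> k) = coord w (\<tau> k))"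
proof -
  define D where "D = {k. 1 \<le> k \<and> k \<le> d \<and> coord u (\<tau> k) \<noteq> coord w (\<tau> k)}"
  have "\<exists>q<d. u ! q \<noteq> w ! q"
  proof (rule ccontr)
    assume "\<not> (\<exists>q<d. u ! q \<noteq> w ! q)"
    then have "u = w" using u w by (intro nth_equalityI) (auto simp: in_sites)
    then show False using ne by simp
  qed
  then obtain q where q: "q < d" "u ! q \<noteq> w ! q" by auto
  obtain k where k: "1 \<le> k" "k \<le> d" "\<tau> k - 1 = q" using hierarchy_surj[OF h q(1)] by auto
  have "k \<in> D" using k q by (simp add: D_def coord_def)
  then have Dne: "D \<noteq> {}" by auto
  have Dfin: "finite D" by (simp add: D_def)
  define l where "l = Max D"
  have lD: "l \<in> D" using Dne Dfin by (simp add: l_def)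
  have "\<forall>k. l < k \<and> k \<le> d \<longrightarrow> coord u (\<tau> k) = coord w (\<tau> k)"
  proof (intro allI impI)
    fix k assume k: "l < k \<and> k \<le> d"
    have "k \<notin> D"
    proof
      assume "k \<in> D"
      then have "k \<le> l" using Max_ge[OF Dfin] by (simp add: l_def)
      then show False using k by simp
    qed
    moreover have "1 \<le> k" using k lD by (simp add: D_def)
    ultimately show "coord u (\<tau> k) = coord w (\<tau> k)" using k by (simp add: D_def)
  qed
  then show ?thesis using lD by (auto simp: D_def)
qed

lemma agree_above_level_iff:
  assumes h: "hierarchy d \<tau>" and m: "m \<le> d" and lu: "length u = d" and lw: "length w = d"
  shows "(\<forall>q<d. q \<notin> (\<lambda>k. \<tau> k - 1) ` {1..m} \<longrightarrow> u ! q = w ! q)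
     \<longleftrightarrow> (\<forall>k. m < k \<and> k \<le> d \<longrightarrow> coord u (\<tau> k) = coord w (\<tau> k))"
proof
  assume a: "\<forall>q<d. q \<notin> (\<lambda>k. \<tau> k - 1) ` {1..m} \<longrightarrow> u ! q = w ! q"
  show "\<forall>k. m < k \<and> k \<le> d \<longrightarrow> coord u (\<tau> k) = coord w (\<tau> k)"
  proof (intro allI impI)
    fix k assume k: "m < k \<and> k \<le> d"
    have r: "1 \<le> \<tau> k" "\<tau> k \<le> d" using hierarchy_range[OF h] k by auto
    have "\<tau> k - 1 \<notin> (\<lambda>k. \<tau> k - 1) ` {1..m}"
      using hierarchy_axis_inj[OF h, of k] k m by fastforce
    then show "coord u (\<tau> k) = coord w (\<tau> k)" using a r by (simp add: coord_def)
  qed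
next
  assume a: "\<forall>k. m < k \<and> k \<le> d \<longrightarrow> coord u (\<tau> k) = coord w (\<tau> k)"
  show "\<forall>q<d. q \<notin> (\<lambda>k. \<tau> k - 1) ` {1..m} \<longrightarrow> u ! q = w ! q"
  proof (intro allI impI)
    fix q assume q: "q < d" "q \<notin> (\<lambda>k. \<tau> k - 1) ` {1..m}"
    obtain k where k: "1 \<le> k" "k \<le> d" "\<tau> k - 1 = q" using hierarchy_surj[OF h q(1)] by auto
    have "\<not> k \<le> m" using q(2) k by auto
    then have "coord u (\<tau> k) = coord w (\<tau> k)" using a k by auto
    then show "u ! q = w ! q" using k by (simp add: coord_def)
  qed
qed

lemma rho_lt: "t < L \<Longrightarrow> rho L s t < L" by (auto simp: rho_def)
lemma rho_cmp: "t < L \<Longrightarrow> t' < L \<Longrightarrow> rho L s t < rho L s t' \<longleftrightarrow> (if even s then t < t' else t' < t)"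
  by (auto simp: rho_def)
lemma rho_inj: "t < L \<Longrightarrow> t' < L \<Longrightarrow> rho L s t = rho L s t' \<longleftrightarrow> t = t'"
  by (auto simp: rho_def)

definition upper_sum :: "(nat \<Rightarrow> nat) \<Rightarrow> nat \<Rightarrow> nat list \<Rightarrow> nat \<Rightarrow> nat" where
  "upper_sum \<sigma> d v i = (\<Sum>k=i+1..d. coord v (\<sigma> k))"

lemma snake_radix_value: "snake L d \<sigma> v = radix_value L d (\<lambda>i. rho L (upper_sum \<sigma> d v i) (coord v (\<sigma> i)))"
  by (simp add: snake_def radix_value_def upper_sum_def)

definition raster :: "nat \<Rightarrow> nat \<Rightarrow> (nat \<Rightarrow> nat) \<Rightarrow> nat list \<Rightarrow> nat" where
  "raster L d \<tau> v = radix_value L d (\<lambda>i. coord v (\<tau> i))"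

lemma upper_sum_cong:
  "(\<forall>k. l < k \<and> k \<le> d \<longrightarrow> coord u (\<sigma> k) = coord w (\<sigma> k)) \<Longrightarrow> l \<le> i \<Longrightarrow>
     upper_sum \<sigma> d u i = upper_sum \<sigma> d w i"
  unfolding upper_sum_def by (rule sum.cong) auto

lemma snake_less_iff:
  assumes h: "hierarchy d \<sigma>" and u: "u \<in> sites L d" and w: "w \<in> sites L d"
    and l: "1 \<le> l" "l \<le> d" "coord u (\<sigma> l) \<noteq> coord w (\<sigma> l)"
    and above: "\<forall>k. l < k \<and> k \<le> d \<longrightarrow> coord u (\<sigma> k) = coord w (\<sigma> k)"
  shows "snake L d \<sigma> u < snake L d \<sigma> w \<longleftrightarrow>
     (if even (upper_sum \<sigma> d w l) then coord u (\<sigma> l) < coord w (\<sigma> l) else coord w (\<sigma> l) < coord u (\<sigma> l))"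
proof -
  have cu: "coord u (\<sigma> i) < L" and cw: "coord w (\<sigma> i) < L" if "1 \<le> i" "i \<le> d" for i
    using coord_lt[OF u h that] coord_lt[OF w h that] by auto
  have ss: "upper_sum \<sigma> d u l = upper_sum \<sigma> d w l" using upper_sum_cong[OF above] by simp
  have "snake L d \<sigma> u < snake L d \<sigma> w \<longleftrightarrow>
      rho L (upper_sum \<sigma> d u l) (coord u (\<sigma> l)) < rho L (upper_sum \<sigma> d w l) (coord w (\<sigma> l))"
    unfolding snake_radix_value
  proof (rule radix_value_less_iff[where l = l])
    show "\<forall>i. 1 \<le> i \<and> i \<le> d \<longrightarrow> rho L (upper_sum \<sigma> d u i) (coord u (\<sigma> i)) < L" using cu rho_lt by auto
    show "\<forall>i. 1 \<le> i \<and> i \<le> d \<longrightarrow> rho L (upper_sum \<sigma> d w i) (coord w (\<sigma> i)) < L" using cw rho_lt by auto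
    show "1 \<le> l" "l \<le> d" using l by auto
    show "\<forall>k. l < k \<and> k \<le> d \<longrightarrow> rho L (upper_sum \<sigma> d u k) (coord u (\<sigma> k)) = rho L (upper_sum \<sigma> d w k) (coord w (\<sigma> k))"
      using above upper_sum_cong[OF above] by auto
    show "rho L (upper_sum \<sigma> d u l) (coord u (\<sigma> l)) \<noteq> rho L (upper_sum \<sigma> d w l) (coord w (\<sigma> l))"
      using ss rho_inj cu cw l by auto
  qed
  also have "\<dots> \<longleftrightarrow> (if even (upper_sum \<sigma> d w l) then coord u (\<sigma> l) < coord w (\<sigma> l) else coord w (\<sigma> l) < coord u (\<sigma> l))"
    using ss rho_cmp cu cw l by auto
  finally show ?thesis .
qed

lemma raster_less_iff:
  assumes h: "hierarchy d \<tau>" and u: "u \<in> sites L d" and w: "w \<in> sites L d"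
    and l: "1 \<le> l" "l \<le> d" "coord u (\<tau> l) \<noteq> coord w (\<tau> l)"
    and above: "\<forall>k. l < k \<and> k \<le> d \<longrightarrow> coord u (\<tau> k) = coord w (\<tau> k)"
  shows "raster L d \<tau> u < raster L d \<tau> w \<longleftrightarrow> coord u (\<tau> l) < coord w (\<tau> l)"
  unfolding raster_def
  by (rule radix_value_less_iff) (use l above coord_lt[OF u h] coord_lt[OF w h] in auto)

section \<open>Diagonal circuits between orderings\<close>

definition phase_transform :: "nat \<Rightarrow> nat \<Rightarrow> nat \<Rightarrow> (nat list \<Rightarrow> nat) \<Rightarrow> (nat list \<Rightarrow> nat) \<Rightarrow> bool" where
  "phase_transform L d k m m' \<longleftrightarrow> (\<exists>C \<phi>. valid_circuit L d C \<and> gate_count C \<le> k * L ^ d \<and> depth C \<le> k * L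
     \<and> circuit_unitary C = phase_op \<phi> \<and> maps_encoding (sites L d) (circuit_unitary C) m m')"

lemma phase_transform_empty:
  assumes "maps_encoding (sites L d) id m m'"
  shows "phase_transform L d k m m'"
  unfolding phase_transform_def
  by (rule exI[of _ "[]"], rule exI[of _ "\<lambda>c. 0"])
    (simp add: assms valid_circuit_def gate_count_def depth_def circuit_unitary_def phase_op_zero)

lemma phase_transform_refl: "phase_transform L d k m m"
  by (rule phase_transform_empty) (simp add: maps_encoding_def)

lemma phase_transform_no_sites: "sites L d = {} \<Longrightarrow> phase_transform L d k m m'"
  by (rule phase_transform_empty) (simp add: maps_encoding_def)

lemma phase_transform_trans:
  assumes "phase_transform L d k m m'" and "phase_transform L d k' m' m''"
  shows "phase_transform L d (k + k') m m''"
proof -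
  obtain C \<phi> where C: "valid_circuit L d C" "gate_count C \<le> k * L ^ d" "depth C \<le> k * L"
    "circuit_unitary C = phase_op \<phi>" "maps_encoding (sites L d) (circuit_unitary C) m m'"
    using assms(1) by (auto simp: phase_transform_def)
  obtain C' \<phi>' where C': "valid_circuit L d C'" "gate_count C' \<le> k' * L ^ d" "depth C' \<le> k' * L"
    "circuit_unitary C' = phase_op \<phi>'" "maps_encoding (sites L d) (circuit_unitary C') m' m''"
    using assms(2) by (auto simp: phase_transform_def)
  have "circuit_unitary (C @ C') = phase_op (\<lambda>c. \<phi> c + \<phi>' c)"
    by (simp add: circuit_unitary_append C(4) C'(4) phase_op_comp)
  moreover have "maps_encoding (sites L d) (circuit_unitary (C @ C')) m m''"
    unfolding circuit_unitary_append by (rule maps_encoding_trans[OF C(5) C'(5)])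
  ultimately show ?thesis
    using C C' unfolding phase_transform_def
    by (intro exI[of _ "C @ C'"]) (auto simp: valid_circuit_append gate_count_append depth_append add_mult_distrib)
qed

lemma phase_transform_sym: "phase_transform L d k m m' \<Longrightarrow> phase_transform L d k m' m"
  unfolding phase_transform_def using maps_encoding_sym phase_op_involution by metis

lemma phase_transform_mono: "phase_transform L d k m m' \<Longrightarrow> k \<le> k' \<Longrightarrow> phase_transform L d k' m m'"
  unfolding phase_transform_def by (meson le_trans mult_le_mono1)

lemma phase_transform_qform:
  assumes "valid_circuit L d C" "gate_count C \<le> k * L ^ d" "depth C \<le> k * L"
    and "implements_phase (concat C) (qform (sites L d) r)"
    and "\<And>j. j \<in> sites L d \<Longrightarrow> r j j = 0"
    and "\<And>j u. j \<in> sites L d \<Longrightarrow> u \<in> sites L d \<Longrightarrow> u \<noteq> j \<Longrightarrow>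
           r j u + r u j = of_bool (m u < m j) + of_bool (m' u < m' j)"
  shows "phase_transform L d k m m'"
proof -
  have "circuit_unitary C = phase_op (qform (sites L d) r)"
    using assms(4) by (simp add: circuit_unitary_concat implements_phase_def)
  then show ?thesis
    using assms maps_encoding_phase_qform[OF finite_sites, where r = r and m = m and m' = m']
    unfolding phase_transform_def by auto
qed

lemma depth_concat_le: "(\<forall>x\<in>set xs. depth (f x) \<le> B) \<Longrightarrow> depth (concat (map f xs)) \<le> length xs * B"
  by (induction xs) (auto simp: depth_def)

lemma gate_count_concat_le: "(\<forall>x\<in>set xs. gate_count (f x) \<le> B) \<Longrightarrow> gate_count (concat (map f xs)) \<le> length xs * B"
  by (induction xs) (auto simp: gate_count_def)

lemma valid_circuit_concat: "(\<forall>x\<in>set xs. valid_circuit L d (f x)) \<Longrightarrow> valid_circuit L d (concat (map f xs))"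
  by (auto simp: valid_circuit_def)

lemma implements_phase_concat_circuits:
  assumes "\<And>x. x \<in> set xs \<Longrightarrow> implements_phase (concat (f x)) (\<Phi> x)"
  shows "implements_phase (concat (concat (map f xs))) (\<lambda>c. \<Sum>x\<leftarrow>xs. \<Phi> x c)"
proof -
  have "concat (concat (map f xs)) = concat (map (\<lambda>x. concat (f x)) xs)" by (induction xs) auto
  then show ?thesis using implements_phase_concat[of xs "\<lambda>x. concat (f x)" \<Phi>] assms by simp
qed

lemma qform_sum: "finite I \<Longrightarrow> (\<Sum>i\<in>I. qform Q (r i) c) = qform Q (\<lambda>w u. \<Sum>i\<in>I. r i w u) c"
  unfolding qform_def by (simp add: sum_distrib_right sum.swap[of _ I] del: sum_mult_of_bool_eq sum_of_bool_mult_eq)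

section \<open>From the snake ordering to the raster ordering\<close>

text \<open>Axis \<open>\<sigma> k - 1\<close> (0-based) carries level \<open>k\<close> of the hierarchy.\<close>

definition lower_levels :: "(nat \<Rightarrow> nat) \<Rightarrow> nat \<Rightarrow> nat list" where
  "lower_levels \<sigma> i = map (\<lambda>k. \<sigma> k - 1) [1..<i]"

lemma lower_levels_axes:
  assumes h: "hierarchy d \<sigma>" and i: "i \<le> d"
  shows "distinct (lower_levels \<sigma> i)" "\<forall>y\<in>set (lower_levels \<sigma> i). y < d"
    "\<And>k. i \<le> k \<Longrightarrow> k \<le> d \<Longrightarrow> \<sigma> k - 1 \<notin> set (lower_levels \<sigma> i)"
proof -
  have "inj_on (\<lambda>k. \<sigma> k - 1) {1..<i}"
    using hierarchy_axis_inj[OF h] i by (intro inj_onI) auto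
  then show "distinct (lower_levels \<sigma> i)" by (simp add: lower_levels_def distinct_map)
  show "\<forall>y\<in>set (lower_levels \<sigma> i). y < d"
    using hierarchy_range[OF h] i by (fastforce simp: lower_levels_def)
  show "\<sigma> k - 1 \<notin> set (lower_levels \<sigma> i)" if "i \<le> k" "k \<le> d" for k
    using hierarchy_axis_inj[OF h, of k] that by (fastforce simp: lower_levels_def)
qed

lemma set_lower_levels: "set (lower_levels \<sigma> i) = (\<lambda>k. \<sigma> k - 1) ` {1..i - 1}"
  by (auto simp: lower_levels_def)

definition odd_upper :: "(nat \<Rightarrow> nat) \<Rightarrow> nat \<Rightarrow> nat \<Rightarrow> nat list \<Rightarrow> bool" where
  "odd_upper \<sigma> d i v = odd (upper_sum \<sigma> d v i)"

lemma lower_box_setting_levels: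
  assumes h: "hierarchy d \<sigma>" and i: "1 \<le> i" "i \<le> d"
  shows "lower_box_setting L d (lower_levels \<sigma> i) (\<sigma> i - 1) (odd_upper \<sigma> d i)"
proof
  show "distinct (lower_levels \<sigma> i)" "\<forall>y\<in>set (lower_levels \<sigma> i). y < d"
    and "\<sigma> i - 1 \<notin> set (lower_levels \<sigma> i)"
    using lower_levels_axes[OF h i(2)] i by auto
  show "\<sigma> i - 1 < d" using hierarchy_range[OF h i] by auto
  fix w r assume "r \<in> floor_sites L d (lower_levels \<sigma> i)" and w: "w \<in> slab L d (lower_levels \<sigma> i) r"
  then have "r \<in> sites L d" "w \<in> sites L d" "\<forall>q<d. q \<notin> set (lower_levels \<sigma> i) \<longrightarrow> w ! q = r ! q"
    by (auto simp: floor_sites_def slab_def)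
  then have "\<forall>k. i - 1 < k \<and> k \<le> d \<longrightarrow> coord w (\<sigma> k) = coord r (\<sigma> k)"
    using agree_above_level_iff[OF h, of "i - 1" w r] i by (simp add: set_lower_levels in_sites)
  then have "upper_sum \<sigma> d w i = upper_sum \<sigma> d r i" unfolding upper_sum_def by (intro sum.cong) auto
  then show "odd_upper \<sigma> d i w = odd_upper \<sigma> d i r" by (simp add: odd_upper_def)
qed

definition level_box :: "(nat \<Rightarrow> nat) \<Rightarrow> nat \<Rightarrow> nat \<Rightarrow> nat list \<Rightarrow> nat list \<Rightarrow> bool" where
  "level_box \<sigma> d i w u =
     ((\<forall>k. i < k \<and> k \<le> d \<longrightarrow> coord u (\<sigma> k) = coord w (\<sigma> k)) \<and> coord u (\<sigma> i) < coord w (\<sigma> i))"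

lemma lower_box_level_box:
  assumes h: "hierarchy d \<sigma>" and i: "1 \<le> i" "i \<le> d" and w: "w \<in> sites L d" and u: "u \<in> sites L d"
  shows "lower_box d (lower_levels \<sigma> i) (\<sigma> i - 1) w u = level_box \<sigma> d i w u"
proof -
  have "{1..i} = insert i {1..i - 1}" using i by auto
  then have "insert (\<sigma> i - 1) (set (lower_levels \<sigma> i)) = (\<lambda>k. \<sigma> k - 1) ` {1..i}"
    by (simp add: set_lower_levels)
  then have "(\<forall>q<d. q \<notin> set (lower_levels \<sigma> i) \<longrightarrow> q \<noteq> \<sigma> i - 1 \<longrightarrow> u ! q = w ! q)
      = (\<forall>q<d. q \<notin> (\<lambda>k. \<sigma> k - 1) ` {1..i} \<longrightarrow> u ! q = w ! q)"
    by auto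
  also have "\<dots> = (\<forall>k. i < k \<and> k \<le> d \<longrightarrow> coord u (\<sigma> k) = coord w (\<sigma> k))"
    using agree_above_level_iff[OF h i(2)] u w by (simp add: in_sites)
  finally show ?thesis by (simp add: lower_box_def level_box_def coord_def)
qed

text \<open>Level \<open>i\<close> of the snake runs backwards exactly where the sum of the coordinates above it is
  odd; on each such row the relative order of two sites at level \<open>i\<close> differs from the raster order,
  which is repaired by the lower-box phase of level \<open>i\<close>.\<close>

definition snake_raster_form :: "nat \<Rightarrow> nat \<Rightarrow> (nat \<Rightarrow> nat) \<Rightarrow> nat list \<Rightarrow> nat list \<Rightarrow> bit" where
  "snake_raster_form L d \<sigma> w u =
     (\<Sum>i\<in>{1..d}. of_bool (odd_upper \<sigma> d i w \<and> lower_box d (lower_levels \<sigma> i) (\<sigma> i - 1) w u))"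

lemma sum_level_box_top_level:
  assumes l: "1 \<le> l" "l \<le> d" "coord u (\<sigma> l) \<noteq> coord w (\<sigma> l)"
    and above: "\<forall>k. l < k \<and> k \<le> d \<longrightarrow> coord u (\<sigma> k) = coord w (\<sigma> k)"
  shows "(\<Sum>i\<in>{1..d}. of_bool (P i \<and> level_box \<sigma> d i w u) :: bit) = of_bool (P l \<and> level_box \<sigma> d l w u)"
proof -
  have "\<not> level_box \<sigma> d i w u" if "i \<in> {1..d}" "i \<noteq> l" for i
  proof (cases "i < l")
    case True
    then show ?thesis using l by (auto simp: level_box_def)
  next
    case False
    then show ?thesis using above that by (auto simp: level_box_def)
  qed
  then have "(\<Sum>i\<in>{1..d}. of_bool (P i \<and> level_box \<sigma> d i w u) :: bit) = (\<Sum>i\<in>{l}. of_bool (P i \<and> level_box \<sigma> d i w u))"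
    using l by (intro sum.mono_neutral_right) auto
  then show ?thesis by simp
qed

lemma snake_raster_form_pointwise:
  assumes h: "hierarchy d \<sigma>" and j: "j \<in> sites L d" and u: "u \<in> sites L d" and ne: "u \<noteq> j"
  shows "snake_raster_form L d \<sigma> j u + snake_raster_form L d \<sigma> u j
    = of_bool (snake L d \<sigma> u < snake L d \<sigma> j) + of_bool (raster L d \<sigma> u < raster L d \<sigma> j)"
proof -
  obtain l where l: "1 \<le> l" "l \<le> d" "coord u (\<sigma> l) \<noteq> coord j (\<sigma> l)"
    and above: "\<forall>k. l < k \<and> k \<le> d \<longrightarrow> coord u (\<sigma> k) = coord j (\<sigma> k)"
    using top_differing_level[OF h u j ne] by blast
  have level_form: "snake_raster_form L d \<sigma> w v = (\<Sum>i\<in>{1..d}. of_bool (odd_upper \<sigma> d i w \<and> level_box \<sigma> d i w v))"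
    if "w \<in> sites L d" "v \<in> sites L d" for w v
    unfolding snake_raster_form_def using lower_box_level_box[OF h _ _ that] by (intro sum.cong refl) auto
  have "snake_raster_form L d \<sigma> j u + snake_raster_form L d \<sigma> u j
      = of_bool (odd_upper \<sigma> d l j \<and> coord u (\<sigma> l) < coord j (\<sigma> l))
        + of_bool (odd_upper \<sigma> d l u \<and> coord j (\<sigma> l) < coord u (\<sigma> l))"
  proof -
    have l': "coord j (\<sigma> l) \<noteq> coord u (\<sigma> l)" and above': "\<forall>k. l < k \<and> k \<le> d \<longrightarrow> coord j (\<sigma> k) = coord u (\<sigma> k)"
      using l above by auto
    show ?thesis
      unfolding level_form[OF j u] level_form[OF u j]
        sum_level_box_top_level[where \<sigma> = \<sigma> and u = u and w = j, OF l above]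
        sum_level_box_top_level[where \<sigma> = \<sigma> and u = j and w = u, OF l(1,2) l' above']
      using above above' by (simp add: level_box_def)
  qed
  moreover have "upper_sum \<sigma> d u l = upper_sum \<sigma> d j l" using upper_sum_cong[OF above] by simp
  ultimately show ?thesis
    unfolding snake_less_iff[OF h u j l above] raster_less_iff[OF h u j l above] odd_upper_def using l(3)
    by (cases "even (upper_sum \<sigma> d j l)"; cases "coord u (\<sigma> l) < coord j (\<sigma> l)") auto
qed

definition level_circuit :: "nat \<Rightarrow> nat \<Rightarrow> (nat \<Rightarrow> nat) \<Rightarrow> nat \<Rightarrow> circuit" where
  "level_circuit L d \<sigma> i = lower_box_circuit L d (lower_levels \<sigma> i) (\<sigma> i - 1) (odd_upper \<sigma> d i)"

definition snake_to_raster :: "nat \<Rightarrow> nat \<Rightarrow> (nat \<Rightarrow> nat) \<Rightarrow> circuit" where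
  "snake_to_raster L d \<sigma> = concat (map (level_circuit L d \<sigma>) [1..<Suc d])"

lemma level_circuit_spec:
  assumes h: "hierarchy d \<sigma>" and L: "1 \<le> L" and i: "1 \<le> i" "i \<le> d"
  shows "valid_circuit L d (level_circuit L d \<sigma> i)" "depth (level_circuit L d \<sigma> i) \<le> (2 * d + 4) * L"
    "gate_count (level_circuit L d \<sigma> i) \<le> (2 * d + 4) * L ^ d"
    "implements_phase (concat (level_circuit L d \<sigma> i))
       (qform (sites L d) (\<lambda>w u. of_bool (odd_upper \<sigma> d i w \<and> lower_box d (lower_levels \<sigma> i) (\<sigma> i - 1) w u)))"
proof -
  interpret lower_box_setting L d "lower_levels \<sigma> i" "\<sigma> i - 1" "odd_upper \<sigma> d i"
    by (rule lower_box_setting_levels[OF h i])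
  have len: "Suc (length (lower_levels \<sigma> i)) = i" using i by (simp add: lower_levels_def)
  show "valid_circuit L d (level_circuit L d \<sigma> i)"
    and "implements_phase (concat (level_circuit L d \<sigma> i))
       (qform (sites L d) (\<lambda>w u. of_bool (odd_upper \<sigma> d i w \<and> lower_box d (lower_levels \<sigma> i) (\<sigma> i - 1) w u)))"
    using valid_lower_box_circuit lower_box_circuit_phase unfolding level_circuit_def by blast+
  have "i * (L - 1) \<le> d * L" using i by (intro mult_le_mono) auto
  then show "depth (level_circuit L d \<sigma> i) \<le> (2 * d + 4) * L"
    using L unfolding level_circuit_def depth_lower_box_circuit len by (simp add: algebra_simps)
  have "gate_count (level_circuit L d \<sigma> i) \<le> (2 * i + 4) * L ^ d"
    using gate_count_lower_box_circuit unfolding level_circuit_def len .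
  also have "\<dots> \<le> (2 * d + 4) * L ^ d" using i by (intro mult_le_mono1) simp
  finally show "gate_count (level_circuit L d \<sigma> i) \<le> (2 * d + 4) * L ^ d" .
qed

lemma phase_transform_snake_raster:
  assumes h: "hierarchy d \<sigma>" and L: "1 \<le> L"
  shows "phase_transform L d (d * (2 * d + 4)) (snake L d \<sigma>) (raster L d \<sigma>)"
proof (rule phase_transform_qform[where C = "snake_to_raster L d \<sigma>" and r = "snake_raster_form L d \<sigma>"])
  have levels: "\<And>i. i \<in> set [1..<Suc d] \<Longrightarrow> 1 \<le> i \<and> i \<le> d" by auto
  note E = level_circuit_spec[OF h L levels[THEN conjunct1] levels[THEN conjunct2]]
  show "valid_circuit L d (snake_to_raster L d \<sigma>)"
    unfolding snake_to_raster_def using E(1) by (intro valid_circuit_concat) blast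
  show "depth (snake_to_raster L d \<sigma>) \<le> d * (2 * d + 4) * L"
    unfolding snake_to_raster_def mult.assoc using depth_concat_le[of "[1..<Suc d]"] E(2) by (simp del: upt_Suc)
  show "gate_count (snake_to_raster L d \<sigma>) \<le> d * (2 * d + 4) * L ^ d"
    unfolding snake_to_raster_def mult.assoc using gate_count_concat_le[of "[1..<Suc d]"] E(3) by (simp del: upt_Suc)
  have sum_eq: "(\<Sum>i\<leftarrow>[1..<Suc d]. qform (sites L d)
      (\<lambda>w u. of_bool (odd_upper \<sigma> d i w \<and> lower_box d (lower_levels \<sigma> i) (\<sigma> i - 1) w u)) c)
      = qform (sites L d) (snake_raster_form L d \<sigma>) c" for c
    unfolding snake_raster_form_def[abs_def]
    by (simp add: sum_list_distinct_conv_sum_set atLeastLessThanSuc_atLeastAtMost qform_sum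
        del: upt_Suc sum_of_bool_eq)
  have "implements_phase (concat (snake_to_raster L d \<sigma>)) (\<lambda>c. \<Sum>i\<leftarrow>[1..<Suc d]. qform (sites L d)
      (\<lambda>w u. of_bool (odd_upper \<sigma> d i w \<and> lower_box d (lower_levels \<sigma> i) (\<sigma> i - 1) w u)) c)"
    unfolding snake_to_raster_def using E(4) by (intro implements_phase_concat_circuits) blast
  then show "implements_phase (concat (snake_to_raster L d \<sigma>)) (qform (sites L d) (snake_raster_form L d \<sigma>))"
    using sum_eq by (rule implements_phase_cong)
  show "snake_raster_form L d \<sigma> j j = 0" for j
    unfolding snake_raster_form_def by (rule sum.neutral) (simp add: lower_box_def)
  show "snake_raster_form L d \<sigma> j u + snake_raster_form L d \<sigma> u j
      = of_bool (snake L d \<sigma> u < snake L d \<sigma> j) + of_bool (raster L d \<sigma> u < raster L d \<sigma> j)"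
    if "j \<in> sites L d" "u \<in> sites L d" "u \<noteq> j" for j u
    by (rule snake_raster_form_pointwise[OF h that])
qed

section \<open>Swapping two adjacent levels\<close>

definition swap_levels :: "(nat \<Rightarrow> nat) \<Rightarrow> nat \<Rightarrow> nat \<Rightarrow> nat" where
  "swap_levels \<tau> i = \<tau>(i := \<tau> (Suc i), Suc i := \<tau> i)"

lemma swap_levels_fst: "swap_levels \<tau> i i = \<tau> (Suc i)" by (simp add: swap_levels_def)
lemma swap_levels_snd: "swap_levels \<tau> i (Suc i) = \<tau> i" by (simp add: swap_levels_def)
lemma swap_levels_other: "k \<noteq> i \<Longrightarrow> k \<noteq> Suc i \<Longrightarrow> swap_levels \<tau> i k = \<tau> k" by (simp add: swap_levels_def)

lemma hierarchy_swap_levels: assumes h: "hierarchy d \<tau>" and i: "1 \<le> i" "i < d" shows "hierarchy d (swap_levels \<tau> i)"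
proof -
  define t :: "nat \<Rightarrow> nat" where "t = id(i := Suc i, Suc i := i)"
  have tt: "t (t x) = x" for x by (simp add: t_def)
  have tA: "t ` {1..d} \<subseteq> {1..d}" using i by (auto simp: t_def)
  have bt: "bij_betw t {1..d} {1..d}"
    by (rule bij_betw_byWitness[where f' = t]) (use tt tA in auto)
  have "swap_levels \<tau> i = \<tau> \<circ> t" by (auto simp: swap_levels_def t_def fun_eq_iff)
  then show ?thesis using bij_betw_trans[OF bt] h by (simp add: hierarchy_def)
qed

definition swap_box :: "(nat \<Rightarrow> nat) \<Rightarrow> nat \<Rightarrow> nat \<Rightarrow> nat list \<Rightarrow> nat list \<Rightarrow> bool" where
  "swap_box \<tau> d i w u = ((\<forall>k. Suc i < k \<and> k \<le> d \<longrightarrow> coord u (\<tau> k) = coord w (\<tau> k))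
      \<and> coord w (\<tau> i) < coord u (\<tau> i) \<and> coord u (\<tau> (Suc i)) < coord w (\<tau> (Suc i)))"

lemma raster_less_iff_two_levels:
  assumes h: "hierarchy d \<tau>" and u: "u \<in> sites L d" and w: "w \<in> sites L d" and i: "1 \<le> i" "i < d"
    and above: "\<forall>k. Suc i < k \<and> k \<le> d \<longrightarrow> coord u (\<tau> k) = coord w (\<tau> k)"
    and ne: "coord u (\<tau> i) \<noteq> coord w (\<tau> i) \<or> coord u (\<tau> (Suc i)) \<noteq> coord w (\<tau> (Suc i))"
  shows "raster L d \<tau> u < raster L d \<tau> w \<longleftrightarrow> (if coord u (\<tau> (Suc i)) = coord w (\<tau> (Suc i))
     then coord u (\<tau> i) < coord w (\<tau> i) else coord u (\<tau> (Suc i)) < coord w (\<tau> (Suc i)))"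
proof (cases "coord u (\<tau> (Suc i)) = coord w (\<tau> (Suc i))")
  case True
  then have above_i: "\<forall>k. i < k \<and> k \<le> d \<longrightarrow> coord u (\<tau> k) = coord w (\<tau> k)"
    using above by (metis Suc_lessI)
  then show ?thesis using raster_less_iff[OF h u w _ _ _ above_i] i ne True by simp
next
  case False
  then show ?thesis using raster_less_iff[OF h u w _ _ False above] i by simp
qed

lemma swap_levels_agree_above:
  assumes above: "\<forall>k. l < k \<and> k \<le> d \<longrightarrow> coord u (\<tau> k) = coord w (\<tau> k)"
    and l: "l \<noteq> i" "l \<noteq> Suc i" and i: "i < d"
  shows "\<forall>k. l < k \<and> k \<le> d \<longrightarrow> coord u (swap_levels \<tau> i k) = coord w (swap_levels \<tau> i k)"
  using assms by (auto simp: swap_levels_def)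

lemma swap_box_pointwise:
  assumes h: "hierarchy d \<tau>" and i: "1 \<le> i" "i < d"
    and j: "j \<in> sites L d" and u: "u \<in> sites L d" and ne: "u \<noteq> j"
  shows "of_bool (swap_box \<tau> d i j u) + of_bool (swap_box \<tau> d i u j)
     = of_bool (raster L d \<tau> u < raster L d \<tau> j)
       + (of_bool (raster L d (swap_levels \<tau> i) u < raster L d (swap_levels \<tau> i) j) :: bit)"
proof -
  have h': "hierarchy d (swap_levels \<tau> i)" by (rule hierarchy_swap_levels[OF h i])
  obtain l where l: "1 \<le> l" "l \<le> d" "coord u (\<tau> l) \<noteq> coord j (\<tau> l)"
    and above: "\<forall>k. l < k \<and> k \<le> d \<longrightarrow> coord u (\<tau> k) = coord j (\<tau> k)"
    using top_differing_level[OF h u j ne] by blast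
  show ?thesis
  proof (cases "l = i \<or> l = Suc i")
    case False
    then have "l < i \<or> Suc i < l" by arith
    then have "\<not> swap_box \<tau> d i j u" "\<not> swap_box \<tau> d i u j"
      using above l i by (auto simp: swap_box_def)
    moreover have "raster L d (swap_levels \<tau> i) u < raster L d (swap_levels \<tau> i) j \<longleftrightarrow> coord u (\<tau> l) < coord j (\<tau> l)"
      using raster_less_iff[OF h' u j l(1,2) _ swap_levels_agree_above[OF above _ _ i(2)]] False l(3)
      by (simp add: swap_levels_other)
    ultimately show ?thesis using raster_less_iff[OF h u j l above] by simp
  next
    case True
    define au aj bu bj where "au = coord u (\<tau> i)" and "aj = coord j (\<tau> i)"
      and "bu = coord u (\<tau> (Suc i))" and "bj = coord j (\<tau> (Suc i))"
    have up: "\<forall>k. Suc i < k \<and> k \<le> d \<longrightarrow> coord u (\<tau> k) = coord j (\<tau> k)"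
      using above True by auto
    have up': "\<forall>k. Suc i < k \<and> k \<le> d \<longrightarrow> coord u (swap_levels \<tau> i k) = coord j (swap_levels \<tau> i k)"
      using up by (simp add: swap_levels_other)
    have nb: "au \<noteq> aj \<or> bu \<noteq> bj" using True l(3) by (auto simp: au_def aj_def bu_def bj_def)
    have "raster L d \<tau> u < raster L d \<tau> j \<longleftrightarrow> (if bu = bj then au < aj else bu < bj)"
      using raster_less_iff_two_levels[OF h u j i up] nb by (simp add: au_def aj_def bu_def bj_def)
    moreover have "raster L d (swap_levels \<tau> i) u < raster L d (swap_levels \<tau> i) j
        \<longleftrightarrow> (if au = aj then bu < bj else au < aj)"
      using raster_less_iff_two_levels[OF h' u j i up'] nb
      by (simp add: swap_levels_fst swap_levels_snd au_def aj_def bu_def bj_def)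
    moreover have "swap_box \<tau> d i j u \<longleftrightarrow> aj < au \<and> bu < bj" "swap_box \<tau> d i u j \<longleftrightarrow> au < aj \<and> bj < bu"
      using up by (auto simp: swap_box_def au_def aj_def bu_def bj_def)
    ultimately show ?thesis using nb
      by (cases "au < aj"; cases "aj < au"; cases "bu < bj"; cases "bj < bu") auto
  qed
qed

lemma cross_box_setting_levels:
  assumes h: "hierarchy d \<tau>" and i: "1 \<le> i" "i < d"
  shows "cross_box_setting d (lower_levels \<tau> i) (\<tau> i - 1) (\<tau> (Suc i) - 1)"
proof
  show "distinct (lower_levels \<tau> i)" "\<forall>y\<in>set (lower_levels \<tau> i). y < d"
    and "\<tau> i - 1 \<notin> set (lower_levels \<tau> i)" "\<tau> (Suc i) - 1 \<notin> set (lower_levels \<tau> i)"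
    using lower_levels_axes[OF h, of i] i by auto
  show "\<tau> i - 1 < d" "\<tau> (Suc i) - 1 < d"
    using hierarchy_range[OF h, of i] hierarchy_range[OF h, of "Suc i"] i by auto
  show "\<tau> i - 1 \<noteq> \<tau> (Suc i) - 1"
    using hierarchy_axis_inj[OF h, of i "Suc i"] i by auto
qed

lemma cross_box_swap_box:
  assumes h: "hierarchy d \<tau>" and i: "1 \<le> i" "i < d" and w: "w \<in> sites L d" and u: "u \<in> sites L d"
  shows "cross_box d (lower_levels \<tau> i) (\<tau> i - 1) (\<tau> (Suc i) - 1) w u = swap_box \<tau> d i w u"
proof -
  have S: "insert (\<tau> i - 1) (insert (\<tau> (Suc i) - 1) (set (lower_levels \<tau> i))) = (\<lambda>k. \<tau> k - 1) ` {1..Suc i}"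
  proof -
    have "{1..Suc i} = insert i (insert (Suc i) {1..i - 1})" using i by auto
    then show ?thesis by (auto simp: set_lower_levels)
  qed
  have "(\<forall>q<d. q \<notin> set (lower_levels \<tau> i) \<longrightarrow> q \<noteq> \<tau> i - 1 \<longrightarrow> q \<noteq> \<tau> (Suc i) - 1 \<longrightarrow> u ! q = w ! q)
      = (\<forall>q<d. q \<notin> (\<lambda>k. \<tau> k - 1) ` {1..Suc i} \<longrightarrow> u ! q = w ! q)"
    unfolding S[symmetric] by auto
  also have "\<dots> = (\<forall>k. Suc i < k \<and> k \<le> d \<longrightarrow> coord u (\<tau> k) = coord w (\<tau> k))"
    using agree_above_level_iff[OF h, of "Suc i" u w] u w i by (simp add: in_sites)
  finally show ?thesis by (simp add: cross_box_def swap_box_def coord_def)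
qed

definition swap_circuit :: "nat \<Rightarrow> nat \<Rightarrow> (nat \<Rightarrow> nat) \<Rightarrow> nat \<Rightarrow> circuit" where
  "swap_circuit L d \<tau> i = cross_box_circuit L d (lower_levels \<tau> i) (\<tau> i - 1) (\<tau> (Suc i) - 1)"

lemma phase_transform_swap_levels:
  assumes h: "hierarchy d \<tau>" and i: "1 \<le> i" "i < d" and L: "1 \<le> L"
  shows "phase_transform L d (2 * d + 20) (raster L d \<tau>) (raster L d (swap_levels \<tau> i))"
proof (rule phase_transform_qform[where C = "swap_circuit L d \<tau> i"
      and r = "\<lambda>w u. of_bool (cross_box d (lower_levels \<tau> i) (\<tau> i - 1) (\<tau> (Suc i) - 1) w u)"])
  interpret cross_box_setting L d "lower_levels \<tau> i" "\<tau> i - 1" "\<tau> (Suc i) - 1"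
    by (rule cross_box_setting_levels[OF h i])
  have len: "length (lower_levels \<tau> i) + 2 \<le> d" using i by (simp add: lower_levels_def)
  then have "(length (lower_levels \<tau> i) + 2) * (L - 1) \<le> d * L" by (intro mult_le_mono) auto
  then show "depth (swap_circuit L d \<tau> i) \<le> (2 * d + 20) * L"
    using L unfolding swap_circuit_def depth_cross_box_circuit by (simp add: algebra_simps)
  have "gate_count (swap_circuit L d \<tau> i) \<le> (2 * (length (lower_levels \<tau> i) + 2) + 20) * L ^ d"
    using gate_count_cross_box_circuit unfolding swap_circuit_def .
  also have "\<dots> \<le> (2 * d + 20) * L ^ d" using len by (intro mult_le_mono1) simp
  finally show "gate_count (swap_circuit L d \<tau> i) \<le> (2 * d + 20) * L ^ d" .
  show "valid_circuit L d (swap_circuit L d \<tau> i)"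
    and "implements_phase (concat (swap_circuit L d \<tau> i)) (qform (sites L d)
      (\<lambda>w u. of_bool (cross_box d (lower_levels \<tau> i) (\<tau> i - 1) (\<tau> (Suc i) - 1) w u)))"
    using valid_cross_box_circuit cross_box_circuit_phase unfolding swap_circuit_def by blast+
  show "(of_bool (cross_box d (lower_levels \<tau> i) (\<tau> i - 1) (\<tau> (Suc i) - 1) j j) :: bit) = 0" for j
    by (simp add: cross_box_def)
  show "of_bool (cross_box d (lower_levels \<tau> i) (\<tau> i - 1) (\<tau> (Suc i) - 1) j u)
      + of_bool (cross_box d (lower_levels \<tau> i) (\<tau> i - 1) (\<tau> (Suc i) - 1) u j)
      = of_bool (raster L d \<tau> u < raster L d \<tau> j)
       + (of_bool (raster L d (swap_levels \<tau> i) u < raster L d (swap_levels \<tau> i) j) :: bit)"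
    if "j \<in> sites L d" "u \<in> sites L d" "u \<noteq> j" for j u
    unfolding cross_box_swap_box[OF h i that(1,2)] cross_box_swap_box[OF h i that(2,1)]
    by (rule swap_box_pointwise[OF h i that])
qed

section \<open>Sorting the hierarchy\<close>

text \<open>Swapping a descent \<open>\<tau> i > \<tau> (i + 1)\<close> strictly increases the weight \<open>\<Sum>k. k \<cdot> \<tau> k\<close>, which is
  bounded by \<open>d\<^sup>3\<close>; so bubble sort needs at most \<open>d\<^sup>3\<close> adjacent swaps.\<close>

definition level_weight :: "nat \<Rightarrow> (nat \<Rightarrow> nat) \<Rightarrow> nat" where
  "level_weight d \<tau> = (\<Sum>k=1..d. k * \<tau> k)"

lemma level_weight_bound: "hierarchy d \<tau> \<Longrightarrow> level_weight d \<tau> \<le> d * (d * d)"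
proof -
  assume h: "hierarchy d \<tau>"
  have "level_weight d \<tau> \<le> (\<Sum>k=1..d. d * d)" unfolding level_weight_def
  proof (rule sum_mono)
    fix k assume "k \<in> {1..d}"
    then show "k * \<tau> k \<le> d * d" using hierarchy_range[OF h, of k] by (intro mult_le_mono) auto
  qed
  then show ?thesis by simp
qed

lemma sum_two_change:
  fixes f g :: "nat \<Rightarrow> nat"
  assumes fin: "finite A" and a: "i \<in> A" "Suc i \<in> A" and eq: "\<And>k. k \<noteq> i \<Longrightarrow> k \<noteq> Suc i \<Longrightarrow> f k = g k"
  shows "sum f A + g i + g (Suc i) = sum g A + f i + f (Suc i)"
proof -
  have B: "sum h A = h i + (h (Suc i) + sum h (A - {i} - {Suc i}))" for h :: "nat \<Rightarrow> nat"
  proof -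
    have "sum h A = h i + sum h (A - {i})" using fin a by (simp add: sum.remove)
    also have "sum h (A - {i}) = h (Suc i) + sum h (A - {i} - {Suc i})" using fin a by (simp add: sum.remove)
    finally show ?thesis .
  qed
  have "sum f (A - {i} - {Suc i}) = sum g (A - {i} - {Suc i})" using eq by (intro sum.cong) auto
  then show ?thesis using B[of f] B[of g] by simp
qed

lemma level_weight_swap_levels:
  assumes i: "1 \<le> i" "i < d" and desc: "\<tau> (Suc i) < \<tau> i"
  shows "level_weight d \<tau> < level_weight d (swap_levels \<tau> i)"
proof -
  have "level_weight d (swap_levels \<tau> i) + i * \<tau> i + Suc i * \<tau> (Suc i)
      = level_weight d \<tau> + i * swap_levels \<tau> i i + Suc i * swap_levels \<tau> i (Suc i)"
    unfolding level_weight_def by (rule sum_two_change) (use i in \<open>auto simp: swap_levels_other\<close>)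
  then have "level_weight d (swap_levels \<tau> i) + i * \<tau> i + Suc i * \<tau> (Suc i)
      = level_weight d \<tau> + i * \<tau> (Suc i) + Suc i * \<tau> i"
    by (simp add: swap_levels_fst swap_levels_snd)
  moreover have "Suc i * \<tau> i = i * \<tau> i + \<tau> i" "Suc i * \<tau> (Suc i) = i * \<tau> (Suc i) + \<tau> (Suc i)" by simp_all
  ultimately show ?thesis using desc by linarith
qed

lemma sorted_hierarchy_id:
  assumes h: "hierarchy d \<tau>" and sorted: "\<forall>i. 1 \<le> i \<and> i < d \<longrightarrow> \<tau> i \<le> \<tau> (Suc i)"
  shows "\<forall>k. 1 \<le> k \<and> k \<le> d \<longrightarrow> \<tau> k = k"
proof -
  have "map \<tau> [1..<Suc d] = [1..<Suc d]"
  proof (rule sorted_distinct_set_unique)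
    show "sorted (map \<tau> [1..<Suc d])" using sorted by (auto simp: sorted_iff_nth_Suc nth_upt simp del: upt_Suc)
    show "distinct (map \<tau> [1..<Suc d])" "set (map \<tau> [1..<Suc d]) = set [1..<Suc d]"
      using h by (simp_all add: distinct_map hierarchy_def bij_betw_def atLeastLessThanSuc_atLeastAtMost del: upt_Suc)
  qed (simp_all del: upt_Suc)
  then show ?thesis using map_eq_conv[of \<tau> "[1..<Suc d]" "\<lambda>k. k"] by auto
qed

lemma phase_transform_raster_identity:
  assumes "hierarchy d \<tau>" and L: "1 \<le> L"
  shows "phase_transform L d ((d * (d * d) - level_weight d \<tau>) * (2 * d + 20)) (raster L d \<tau>) (raster L d (\<lambda>k. k))"
  using assms(1)
proof (induction "d * (d * d) - level_weight d \<tau>" arbitrary: \<tau> rule: less_induct)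
  case less
  show ?case
  proof (cases "\<forall>i. 1 \<le> i \<and> i < d \<longrightarrow> \<tau> i \<le> \<tau> (Suc i)")
    case True
    then have "raster L d \<tau> = raster L d (\<lambda>k. k)"
      using sorted_hierarchy_id[OF less.prems True] unfolding raster_def by (intro ext radix_value_cong) auto
    then show ?thesis by (simp only: phase_transform_refl)
  next
    case False
    then obtain i where i: "1 \<le> i" "i < d" and desc: "\<tau> (Suc i) < \<tau> i" by (auto simp: not_le)
    have h': "hierarchy d (swap_levels \<tau> i)" by (rule hierarchy_swap_levels[OF less.prems i])
    have lt: "d * (d * d) - level_weight d (swap_levels \<tau> i) < d * (d * d) - level_weight d \<tau>"
      using level_weight_swap_levels[OF i desc] level_weight_bound[OF h'] by simp
    have "phase_transform L d ((2 * d + 20) + (d * (d * d) - level_weight d (swap_levels \<tau> i)) * (2 * d + 20))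
        (raster L d \<tau>) (raster L d (\<lambda>k. k))"
      by (rule phase_transform_trans[OF phase_transform_swap_levels[OF less.prems i L] less.hyps[OF lt h']])
    moreover have "(2 * d + 20) + (d * (d * d) - level_weight d (swap_levels \<tau> i)) * (2 * d + 20)
        \<le> (d * (d * d) - level_weight d \<tau>) * (2 * d + 20)"
      using mult_le_mono1[OF Suc_leI[OF lt], of "2 * d + 20"] by simp
    ultimately show ?thesis by (rule phase_transform_mono)
  qed
qed

lemma phase_transform_snake_identity:
  assumes h: "hierarchy d \<sigma>" and d: "0 < d"
  shows "phase_transform L d (d * (2 * d + 4) + d * (d * d) * (2 * d + 20)) (snake L d \<sigma>) (raster L d (\<lambda>k. k))"
proof (cases "L = 0")
  case True
  then have "sites L d = {}" using d by (auto simp: sites_def)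
  then show ?thesis by (rule phase_transform_no_sites)
next
  case False
  then have L: "1 \<le> L" by simp
  show ?thesis
    using phase_transform_trans[OF phase_transform_snake_raster[OF h L] phase_transform_raster_identity[OF h L]]
    by (rule phase_transform_mono) simp
qed

theorem mainTheorem13:
  fixes d :: nat
  assumes "d \<ge> 2"
  shows "\<exists>K :: nat. \<forall>(L :: nat) \<sigma> \<sigma>'. hierarchy d \<sigma> \<longrightarrow> hierarchy d \<sigma>' \<longrightarrow>
           (\<exists>C :: circuit. valid_circuit L d C
              \<and> gate_count C \<le> K * L ^ d
              \<and> depth C \<le> K * L
              \<and> maps_encoding (sites L d) (circuit_unitary C) (snake L d \<sigma>) (snake L d \<sigma>'))"
proof -
  define K where "K = d * (2 * d + 4) + d * (d * d) * (2 * d + 20)"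
  have "phase_transform L d (K + K) (snake L d \<sigma>) (snake L d \<sigma>')"
    if "hierarchy d \<sigma>" "hierarchy d \<sigma>'" for L \<sigma> \<sigma>'
    using phase_transform_trans[OF phase_transform_snake_identity[OF that(1)]
        phase_transform_sym[OF phase_transform_snake_identity[OF that(2)]]] assms
    unfolding K_def by simp
  then show ?thesis
    unfolding phase_transform_def by (intro exI[of _ "K + K"] allI impI) blast
qed

end
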